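(* Let $\mathcal{R}$ be a TRS and $\ell \to r$ a left-linear rewrite rule. Consider a local peak $\Gamma$ of the form $t \;{}_{\mathcal{R}}\!\overset{P}{\Leftarrow}\; s \xrightarrow{\epsilon}_{\{\ell \to r\}} u$, together with a fixed choice of the rules $\ell_p \to r_p \in \mathcal{R}$ used at the positions $p \in P$ in the parallel step $s \overset{P}{\Rightarrow}_\mathcal{R} t$. (a) If $\Gamma$ is orthogonal, then there exist a term $v$ and a set $P'$ of pairwise parallel positions such that $t = v$ or $t \xrightarrow{\epsilon}_{\{\ell\to r\}} v$, and $u \overset{P'}{\Rightarrow}_\mathcal{R} v$, and $\mathcal{V}ar(v,P') \subseteq \mathcal{V}ar(s,P)$. (b) If $\Gamma$ is not orthogonal, then there exist a parallel critical peak $t_0 \;{}_{\mathcal{R}}\!\overset{P_0}{\Leftarrow}\; s_0 \xrightarrow{\epsilon}_{\{\ell \to r\}} u_0$ between $\mathcal{R}$ and $\{\ell \to r\}$ and substitutions $\sigma$, $\tau$ such that $s = s_0\sigma$, $t = t_0\tau$, $u = u_0\sigma$, $\sigma \Rightarrow_\mathcal{R} \tau$, $t_0\sigma \overset{P\setminus P_0}{\Rightarrow}_\mathcal{R} t_0\tau$, and $P_0 \subseteq P$.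
   Context: Terms are built from a signature $\mathcal{F}$ and variables $\mathcal{V}$. A rule $\ell\to r$ requires $\ell\notin\mathcal{V}$ and $\mathcal{V}ar(r)\subseteq\mathcal{V}ar(\ell)$; a TRS is a set of rules, $\to_\mathcal{R}$ its rewrite relation, and $s \xrightarrow{p}_\mathcal{R} t$ denotes a step at position $p$ ($\epsilon$ is the root position). A rule is left-linear if no variable occurs twice in $\ell$. Positions $p,q$ are parallel if neither is a prefix of the other. $\mathcal{P}os_\mathcal{F}(t)$ is the set of positions of function symbols in $t$. Parallel step: for a set $P$ of pairwise parallel positions of $s$, $s \overset{P}{\Rightarrow}_\mathcal{R} t$ holds iff for every $p\in P$ there are a rule $\ell'\to r'\in\mathcal{R}$ and a substitution $\mu$ with $s|_p=\ell'\mu$ and $t|_p=r'\mu$, and $t$ coincides with $s$ outside the positions in $P$ (i.e. $t = s[t|_p]_{p\in P}$); $P=\varnothing$ gives $s=t$. $s\Rightarrow_\mathcal{R} t$ means $s \overset{P}{\Rightarrow}_\mathcal{R} t$ for some $P$, and $t \;{}_{\mathcal{R}}\!\overset{P}{\Leftarrow}\; s$ means $s \overset{P}{\Rightarrow}_\mathcal{R} t$. For substitutions, $\sigma\Rightarrow_\mathcal{R}\tau$ means $x\sigma\Rightarrow_\mathcal{R}x\tau$ for all variables $x$. $\mathcal{V}ar(t,P)=\bigcup_{p\in P}\mathcal{V}ar(t|_p)$. A local peak $t \;{}_{\mathcal{R}}\!\overset{P}{\Leftarrow}\; s \xrightarrow{\epsilon}_{\{\ell\to r\}} u$ using rule $\ell_p\to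 r_p$ at each $p\in P$ is orthogonal if either $P\cap\mathcal{P}os_\mathcal{F}(\ell)=\varnothing$, or $P=\{\epsilon\}$ and $\ell_\epsilon\to r_\epsilon$ is a variant of $\ell\to r$ (a variant is a rule obtained by a variable renaming). Parallel critical peak between TRSs $\mathcal{R}$ and $\mathcal{S}$: let $\ell\to r$ be a variant of an $\mathcal{S}$-rule, $P\subseteq\mathcal{P}os_\mathcal{F}(\ell)$ a non-empty set of pairwise parallel positions, and for each $p\in P$ let $\ell_p\to r_p$ be a variant of an $\mathcal{R}$-rule, such that none of the rules $\ell\to r$, $\ell_p\to r_p$ ($p\in P$) shares a variable with another, $\sigma$ is a most general unifier of $\{\ell_p\approx\ell|_p\}_{p\in P}$, and if $P=\{\epsilon\}$ then $\ell_\epsilon\to r_\epsilon$ is not a variant of $\ell\to r$. Then the peak $(\ell\sigma)[r_p\sigma]_{p\in P} \;{}_{\mathcal{R}}\!\overset{P}{\Leftarrow}\; \ell\sigma \xrightarrow{\epsilon}_\mathcal{S} r\sigma$ is a parallel critical peak between $\mathcal{R}$ and $\mathcal{S}$. *)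

theory Defs
  imports Main
begin

datatype ('f, 'v) "term" = Var 'v | Fun 'f "('f, 'v) term list"

type_synonym pos = "nat list"
type_synonym ('f, 'v) rule = "('f, 'v) term \<times> ('f, 'v) term"
type_synonym ('f, 'v) subst = "'v \<Rightarrow> ('f, 'v) term"

fun vars_term :: "('f, 'v) term \<Rightarrow> 'v set" where
  "vars_term (Var x) = {x}"
| "vars_term (Fun f ss) = \<Union> (vars_term ` set ss)"

fun subst_apply :: "('f, 'v) term \<Rightarrow> ('f, 'v) subst \<Rightarrow> ('f, 'v) term" (infixl "\<cdot>" 67) where
  "Var x \<cdot> \<sigma> = \<sigma> x"
| "Fun f ss \<cdot> \<sigma> = Fun f (map (\<lambda>t. t \<cdot> \<sigma>) ss)"

definition subst_comp :: "('f, 'v) subst \<Rightarrow> ('f, 'v) subst \<Rightarrow> ('f, 'v) subst" where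
  "subst_comp \<sigma> \<delta> = (\<lambda>x. \<sigma> x \<cdot> \<delta>)"

text \<open>Subterm at a position (the Var case for non-empty positions is junk).\<close>
fun subt_at :: "('f, 'v) term \<Rightarrow> pos \<Rightarrow> ('f, 'v) term" (infixl "|'_" 67) where
  "subt_at s [] = s"
| "subt_at (Fun f ss) (i # p) = subt_at (ss ! i) p"
| "subt_at (Var x) (i # p) = Var x"

lemma size_nth_less: "i < length ss \<Longrightarrow> size (ss ! i) < Suc (size_list size ss)"
  by (metis less_Suc_eq_le nth_mem size_list_estimation' order_refl)

function poss :: "('f, 'v) term \<Rightarrow> pos set" where
  "poss (Var x) = {[]}"
| "poss (Fun f ss) = insert [] (\<Union>i\<in>{..<length ss}. (\<lambda>p. i # p) ` poss (ss ! i))"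
  by pat_completeness auto
termination
  by (relation "measure size") (auto simp: size_nth_less)

function fun_poss :: "('f, 'v) term \<Rightarrow> pos set" where
  "fun_poss (Var x) = {}"
| "fun_poss (Fun f ss) = insert [] (\<Union>i\<in>{..<length ss}. (\<lambda>p. i # p) ` fun_poss (ss ! i))"
  by pat_completeness auto
termination
  by (relation "measure size") (auto simp: size_nth_less)

text \<open>Parallel replacement \<open>s[f p]_{p \<in> P}\<close> (meaningful when \<open>P\<close> is a set of pairwise
  parallel positions of \<open>s\<close>).\<close>
function par_replace :: "('f, 'v) term \<Rightarrow> pos set \<Rightarrow> (pos \<Rightarrow> ('f, 'v) term) \<Rightarrow> ('f, 'v) term" where
  "par_replace s P g =
     (if [] \<in> P then g []
      else (case s of Var x \<Rightarrow> Var x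
           | Fun f ss \<Rightarrow> Fun f (map (\<lambda>i. par_replace (ss ! i) {q. i # q \<in> P} (\<lambda>q. g (i # q)))
                                 [0..<length ss])))"
  by pat_completeness auto
termination
  by (relation "measure (\<lambda>(s, _, _). size s)") (auto simp: size_nth_less)

definition prefix_pos :: "pos \<Rightarrow> pos \<Rightarrow> bool" where
  "prefix_pos p q \<longleftrightarrow> (\<exists>r. q = p @ r)"

definition parallel_pos :: "pos \<Rightarrow> pos \<Rightarrow> bool" where
  "parallel_pos p q \<longleftrightarrow> \<not> prefix_pos p q \<and> \<not> prefix_pos q p"

definition pairwise_parallel :: "pos set \<Rightarrow> bool" where
  "pairwise_parallel P \<longleftrightarrow> (\<forall>p\<in>P. \<forall>q\<in>P. p \<noteq> q \<longrightarrow> parallel_pos p q)"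

definition vars_at :: "('f, 'v) term \<Rightarrow> pos set \<Rightarrow> 'v set" where
  "vars_at t P = (\<Union>p\<in>P. vars_term (t |_ p))"

definition wf_rule :: "('f, 'v) rule \<Rightarrow> bool" where
  "wf_rule lr \<longleftrightarrow> (\<forall>x. fst lr \<noteq> Var x) \<and> vars_term (snd lr) \<subseteq> vars_term (fst lr)"

definition wf_trs :: "('f, 'v) rule set \<Rightarrow> bool" where
  "wf_trs R \<longleftrightarrow> (\<forall>lr\<in>R. wf_rule lr)"

definition left_linear_term :: "('f, 'v) term \<Rightarrow> bool" where
  "left_linear_term l \<longleftrightarrow> (\<forall>p\<in>poss l. \<forall>q\<in>poss l. \<forall>x.
      l |_ p = Var x \<and> l |_ q = Var x \<longrightarrow> p = q)"

definition left_linear_rule :: "('f, 'v) rule \<Rightarrow> bool" where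
  "left_linear_rule lr \<longleftrightarrow> left_linear_term (fst lr)"

definition root_step :: "('f, 'v) rule set \<Rightarrow> ('f, 'v) term \<Rightarrow> ('f, 'v) term \<Rightarrow> bool" where
  "root_step R s u \<longleftrightarrow> (\<exists>(l, r)\<in>R. \<exists>\<mu>. s = l \<cdot> \<mu> \<and> u = r \<cdot> \<mu>)"

definition par_step_with ::
  "('f, 'v) rule set \<Rightarrow> pos set \<Rightarrow> (pos \<Rightarrow> ('f, 'v) rule) \<Rightarrow> ('f, 'v) term \<Rightarrow> ('f, 'v) term \<Rightarrow> bool" where
  "par_step_with R P rl s t \<longleftrightarrow>
     P \<subseteq> poss s \<and> pairwise_parallel P \<and>
     (\<forall>p\<in>P. rl p \<in> R \<and> (\<exists>\<mu>. s |_ p = fst (rl p) \<cdot> \<mu> \<and> t |_ p = snd (rl p) \<cdot> \<mu>)) \<and>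
     t = par_replace s P (\<lambda>p. t |_ p)"

definition par_step :: "('f, 'v) rule set \<Rightarrow> pos set \<Rightarrow> ('f, 'v) term \<Rightarrow> ('f, 'v) term \<Rightarrow> bool" where
  "par_step R P s t \<longleftrightarrow> (\<exists>rl. par_step_with R P rl s t)"

definition par_rstep :: "('f, 'v) rule set \<Rightarrow> ('f, 'v) term \<Rightarrow> ('f, 'v) term \<Rightarrow> bool" where
  "par_rstep R s t \<longleftrightarrow> (\<exists>P. par_step R P s t)"

definition par_subst :: "('f, 'v) rule set \<Rightarrow> ('f, 'v) subst \<Rightarrow> ('f, 'v) subst \<Rightarrow> bool" where
  "par_subst R \<sigma> \<tau> \<longleftrightarrow> (\<forall>x. par_rstep R (\<sigma> x) (\<tau> x))"

definition variant :: "('f, 'v) rule \<Rightarrow> ('f, 'v) rule \<Rightarrow> bool" where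
  "variant lr' lr \<longleftrightarrow> (\<exists>\<pi>. bij \<pi> \<and> fst lr' = fst lr \<cdot> (Var \<circ> \<pi>) \<and> snd lr' = snd lr \<cdot> (Var \<circ> \<pi>))"

definition rule_vars :: "('f, 'v) rule \<Rightarrow> 'v set" where
  "rule_vars lr = vars_term (fst lr) \<union> vars_term (snd lr)"

definition orthogonal_peak :: "('f, 'v) rule \<Rightarrow> pos set \<Rightarrow> (pos \<Rightarrow> ('f, 'v) rule) \<Rightarrow> bool" where
  "orthogonal_peak lr P rl \<longleftrightarrow>
     P \<inter> fun_poss (fst lr) = {} \<or> (P = {[]} \<and> variant (rl []) lr)"

definition unifier :: "(('f, 'v) term \<times> ('f, 'v) term) set \<Rightarrow> ('f, 'v) subst \<Rightarrow> bool" where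
  "unifier E \<sigma> \<longleftrightarrow> (\<forall>(a, b)\<in>E. a \<cdot> \<sigma> = b \<cdot> \<sigma>)"

definition mgu :: "(('f, 'v) term \<times> ('f, 'v) term) set \<Rightarrow> ('f, 'v) subst \<Rightarrow> bool" where
  "mgu E \<sigma> \<longleftrightarrow> unifier E \<sigma> \<and> (\<forall>\<theta>. unifier E \<theta> \<longrightarrow> (\<exists>\<delta>. \<theta> = subst_comp \<sigma> \<delta>))"

definition par_crit_peak ::
  "('f, 'v) rule set \<Rightarrow> ('f, 'v) rule set \<Rightarrow>
   ('f, 'v) term \<Rightarrow> pos set \<Rightarrow> ('f, 'v) term \<Rightarrow> ('f, 'v) term \<Rightarrow> bool" where
  "par_crit_peak R S t0 P0 s0 u0 \<longleftrightarrow>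
     (\<exists>l r rl \<sigma>.
        (\<exists>lr\<in>S. variant (l, r) lr) \<and>
        P0 \<subseteq> fun_poss l \<and> P0 \<noteq> {} \<and> pairwise_parallel P0 \<and>
        (\<forall>p\<in>P0. \<exists>lr\<in>R. variant (rl p) lr) \<and>
        (\<forall>p\<in>P0. rule_vars (rl p) \<inter> rule_vars (l, r) = {}) \<and>
        (\<forall>p\<in>P0. \<forall>q\<in>P0. p \<noteq> q \<longrightarrow> rule_vars (rl p) \<inter> rule_vars (rl q) = {}) \<and>
        mgu ((\<lambda>p. (fst (rl p), l |_ p)) ` P0) \<sigma> \<and>
        (P0 = {[]} \<longrightarrow> \<not> variant (rl []) (l, r)) \<and>
        s0 = l \<cdot> \<sigma> \<and>
        t0 = par_replace (l \<cdot> \<sigma>) P0 (\<lambda>p. snd (rl p) \<cdot> \<sigma>) \<and>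
        u0 = r \<cdot> \<sigma>)"

end

(* Write s = l \<cdot> \<mu>.  If no position of P is a function position of l, all steps of
   s \<Rightarrow>\<^sup>P t happen inside \<mu>; as l is linear, t = l \<cdot> \<rho> with \<mu> x \<Rightarrow> \<rho> x for every variable x,
   so the root step applies to t and the steps in the variables are copied into u = r \<cdot> \<mu>.

   Otherwise let P0 = P \<inter> Pos_F(l).  Renamed apart, the rules used at P0 have a common matcher
   \<theta> that agrees with \<mu> on l, so \<theta> unifies their left-hand sides with l at P0.  An mgu \<sigma> of
   this problem yields the parallel critical peak, and \<theta> = \<sigma>\<delta>.  The steps at P - P0 lie below
   the variables X of l that do not occur below P0.  These variables are fixed by \<sigma> and occur in
   no other \<sigma> z, so redefining \<delta> on X as the results of those steps gives \<tau> with \<delta> \<Rightarrow> \<tau>. *)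

theory Submission
  imports Defs
begin

lemma subst_apply_Var_ident [simp]: "t \<cdot> Var = t"
  by (induction t) (auto intro: map_idI)

lemma subst_subst_comp: "t \<cdot> \<sigma> \<cdot> \<tau> = t \<cdot> subst_comp \<sigma> \<tau>"
  by (induction t) (auto simp: subst_comp_def)

lemma subst_comp_assoc: "subst_comp (subst_comp \<sigma> \<tau>) \<delta> = subst_comp \<sigma> (subst_comp \<tau> \<delta>)"
  by (auto simp: subst_comp_def subst_subst_comp)

lemma term_subst_eq: "(\<And>x. x \<in> vars_term t \<Longrightarrow> \<sigma> x = \<tau> x) \<Longrightarrow> t \<cdot> \<sigma> = t \<cdot> \<tau>"
  by (induction t) auto

lemma term_subst_eq_rev: "t \<cdot> \<sigma> = t \<cdot> \<tau> \<Longrightarrow> x \<in> vars_term t \<Longrightarrow> \<sigma> x = \<tau> x"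
  by (induction t) (auto simp: map_eq_conv)

lemma vars_term_subst: "vars_term (t \<cdot> \<sigma>) = (\<Union>x\<in>vars_term t. vars_term (\<sigma> x))"
  by (induction t) auto

lemma finite_vars_term [simp]: "finite (vars_term t)"
  by (induction t) auto

lemma subst_glue:
  assumes "\<forall>i\<in>I. \<forall>j\<in>I. i \<noteq> j \<longrightarrow> V i \<inter> V j = {}"
  obtains \<theta> where "\<And>i x. i \<in> I \<Longrightarrow> x \<in> V i \<Longrightarrow> \<theta> x = \<sigma> i x"
    and "\<And>x. x \<notin> (\<Union>i\<in>I. V i) \<Longrightarrow> \<theta> x = \<sigma>\<^sub>0 x"
proof -
  let ?\<theta> = "\<lambda>x. if \<exists>i\<in>I. x \<in> V i then \<sigma> (SOME i. i \<in> I \<and> x \<in> V i) x else \<sigma>\<^sub>0 x"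
  have "?\<theta> x = \<sigma> i x" if "i \<in> I" "x \<in> V i" for i x
  proof -
    have "(SOME i. i \<in> I \<and> x \<in> V i) = i"
      using assms that by (intro some_equality) auto
    with that show ?thesis by auto
  qed
  then show thesis
    using that[of ?\<theta>] by auto
qed

lemma Cons_in_poss_Fun [simp]: "i # q \<in> poss (Fun f ss) \<longleftrightarrow> i < length ss \<and> q \<in> poss (ss ! i)"
  by auto

lemma Cons_notin_poss_Var [simp]: "i # q \<notin> poss (Var x)"
  by auto

lemma Nil_in_poss [simp]: "[] \<in> poss t"
  by (cases t) auto

lemma Cons_in_fun_poss_Fun [simp]:
  "i # q \<in> fun_poss (Fun f ss) \<longleftrightarrow> i < length ss \<and> q \<in> fun_poss (ss ! i)"
  by auto

lemma Nil_in_fun_poss_Fun [simp]: "[] \<in> fun_poss (Fun f ss)"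
  by simp

declare poss.simps(2)[simp del] fun_poss.simps(2)[simp del]

lemma fun_poss_imp_poss: "p \<in> fun_poss t \<Longrightarrow> p \<in> poss t"
proof (induction t arbitrary: p)
  case (Fun f ss)
  then show ?case by (cases p) auto
qed auto

lemma finite_poss: "finite (poss t)"
proof (induction t)
  case (Fun f ss)
  then show ?case by (auto simp: poss.simps)
qed auto

lemma finite_fun_poss: "finite (fun_poss t)"
  using finite_subset[OF _ finite_poss] fun_poss_imp_poss by blast

lemma subt_at_Var [simp]: "Var x |_ p = Var x"
  by (cases p) auto

lemma subt_at_append: "s |_ (p @ q) = s |_ p |_ q"
  by (induction s p rule: subt_at.induct) auto

lemma append_in_poss_iff: "p @ q \<in> poss s \<longleftrightarrow> p \<in> poss s \<and> q \<in> poss (s |_ p)"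
  by (induction s p rule: subt_at.induct) auto

lemma poss_imp_subst_poss: "p \<in> poss t \<Longrightarrow> p \<in> poss (t \<cdot> \<sigma>)"
proof (induction t arbitrary: p)
  case (Fun f ss)
  then show ?case by (cases p) auto
qed auto

lemma subt_at_subst: "p \<in> poss t \<Longrightarrow> t \<cdot> \<sigma> |_ p = t |_ p \<cdot> \<sigma>"
proof (induction t arbitrary: p)
  case (Fun f ss)
  then show ?case by (cases p) auto
qed auto

lemma var_pos_exists: "x \<in> vars_term t \<Longrightarrow> \<exists>q\<in>poss t. t |_ q = Var x"
proof (induction t)
  case (Fun f ss)
  then obtain i where i: "i < length ss" "x \<in> vars_term (ss ! i)"
    by (auto simp: in_set_conv_nth)
  with Fun obtain q where "q \<in> poss (ss ! i)" "ss ! i |_ q = Var x"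
    by (meson nth_mem)
  with i show ?case by (intro bexI[of _ "i # q"]) auto
qed auto

lemma prefix_pos_Nil [simp]: "prefix_pos [] q"
  by (simp add: prefix_pos_def)

lemma prefix_pos_Cons_Nil [simp]: "\<not> prefix_pos (i # p) []"
  by (simp add: prefix_pos_def)

lemma prefix_pos_Cons_Cons [simp]: "prefix_pos (i # p) (j # q) \<longleftrightarrow> i = j \<and> prefix_pos p q"
  by (auto simp: prefix_pos_def)

lemma prefix_pos_append_append [simp]: "prefix_pos (q @ p) (q @ p') \<longleftrightarrow> prefix_pos p p'"
  by (auto simp: prefix_pos_def)

lemma pairwise_parallel_Nil: "pairwise_parallel P \<Longrightarrow> [] \<in> P \<Longrightarrow> P = {[]}"
  unfolding pairwise_parallel_def parallel_pos_def using prefix_pos_Nil by blast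

lemma pairwise_parallel_subset: "pairwise_parallel P \<Longrightarrow> Q \<subseteq> P \<Longrightarrow> pairwise_parallel Q"
  by (auto simp: pairwise_parallel_def)

lemma pairwise_parallel_below: "pairwise_parallel P \<Longrightarrow> pairwise_parallel {p. q @ p \<in> P}"
  unfolding pairwise_parallel_def parallel_pos_def using prefix_pos_append_append by blast

lemma pairwise_parallel_below_Cons: "pairwise_parallel P \<Longrightarrow> pairwise_parallel {p. i # p \<in> P}"
  using pairwise_parallel_below[of P "[i]"] by simp

lemma pairwise_parallel_below_member:
  "pairwise_parallel P \<Longrightarrow> p \<in> P \<Longrightarrow> {p'. p @ p' \<in> P} = {[]}"
  unfolding pairwise_parallel_def parallel_pos_def prefix_pos_def
  by auto (metis append_self_conv)

lemma prefix_of_var_pos_in_fun_poss: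
  "q \<in> poss l \<Longrightarrow> l |_ q = Var x \<Longrightarrow> prefix_pos p q \<Longrightarrow> p \<noteq> q \<Longrightarrow> p \<in> fun_poss l"
proof (induction l arbitrary: p q)
  case (Var y)
  then show ?case by (auto simp: prefix_pos_def)
next
  case (Fun f ls)
  then show ?case
    by (cases p; cases q) (auto simp: prefix_pos_def)
qed

declare par_replace.simps[simp del]

lemma par_replace_root [simp]: "[] \<in> P \<Longrightarrow> par_replace s P g = g []"
  by (subst par_replace.simps) simp

lemma par_replace_Var [simp]: "[] \<notin> P \<Longrightarrow> par_replace (Var x) P g = Var x"
  by (subst par_replace.simps) simp

lemma par_replace_Fun [simp]:
  "[] \<notin> P \<Longrightarrow> par_replace (Fun f ss) P g =
     Fun f (map (\<lambda>i. par_replace (ss ! i) {q. i # q \<in> P} (\<lambda>q. g (i # q))) [0..<length ss])"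
  by (subst par_replace.simps) simp

lemma par_replace_empty [simp]: "par_replace s {} g = s"
proof (induction s arbitrary: g)
  case (Fun f ss)
  then have "map (\<lambda>i. par_replace (ss ! i) {} (\<lambda>q. g (i # q))) [0..<length ss] = ss"
    by (auto intro: nth_equalityI)
  then show ?case by simp
qed simp

lemma par_replace_subt_at:
  assumes "q \<in> poss s" and "\<forall>p\<in>P. prefix_pos p q \<longrightarrow> p = q"
  shows "q \<in> poss (par_replace s P g) \<and>
    par_replace s P g |_ q = par_replace (s |_ q) {p. q @ p \<in> P} (\<lambda>p. g (q @ p))"
  using assms
proof (induction s arbitrary: P g q)
  case (Var x)
  then show ?case by (cases "[] \<in> P") auto
next
  case (Fun f ss)
  show ?case
  proof (cases q)
    case Nil
    then show ?thesis by (cases "[] \<in> P") auto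
  next
    case (Cons i q')
    with Fun.prems have "[] \<notin> P" and i: "i < length ss" "q' \<in> poss (ss ! i)"
      by (auto simp: prefix_pos_def)
    moreover have "\<forall>p\<in>{p. i # p \<in> P}. prefix_pos p q' \<longrightarrow> p = q'"
      using Fun.prems(2) Cons by auto
    ultimately show ?thesis
      using Fun.IH[OF nth_mem[OF i(1)] i(2)] Cons by auto
  qed
qed

lemma par_replace_at:
  assumes "P \<subseteq> poss s" "pairwise_parallel P" "p \<in> P"
  shows "p \<in> poss (par_replace s P g) \<and> par_replace s P g |_ p = g p"
proof -
  have "\<forall>p'\<in>P. prefix_pos p' p \<longrightarrow> p' = p"
    using assms(2,3) by (auto simp: pairwise_parallel_def parallel_pos_def)
  then show ?thesis
    using par_replace_subt_at[of p s P g] pairwise_parallel_below_member[OF assms(2,3)] assms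
    by auto
qed

lemma par_replace_parallel:
  assumes "p \<in> poss s" "\<forall>q\<in>P. \<not> prefix_pos q p \<and> \<not> prefix_pos p q"
  shows "p \<in> poss (par_replace s P g) \<and> par_replace s P g |_ p = s |_ p"
proof -
  have "{p'. p @ p' \<in> P} = {}"
    using assms(2) by (auto simp: prefix_pos_def)
  then show ?thesis
    using par_replace_subt_at[of p s P g] assms by auto
qed

lemma par_replace_cong:
  "(\<And>p. p \<in> P \<Longrightarrow> g p = g' p) \<Longrightarrow> par_replace s P g = par_replace s P g'"
proof (induction s arbitrary: P g g')
  case (Var x)
  then show ?case by (cases "[] \<in> P") auto
next
  case (Fun f ss)
  have "par_replace (ss ! i) {q. i # q \<in> P} (\<lambda>q. g (i # q)) =
      par_replace (ss ! i) {q. i # q \<in> P} (\<lambda>q. g' (i # q))" if "i < length ss" for i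
    by (rule Fun.IH[OF nth_mem[OF that]]) (use Fun.prems in simp)
  then show ?case
    by (cases "[] \<in> P") (auto simp: Fun.prems)
qed

lemma par_replace_subst:
  "P \<subseteq> poss s \<Longrightarrow> par_replace s P g \<cdot> \<sigma> = par_replace (s \<cdot> \<sigma>) P (\<lambda>p. g p \<cdot> \<sigma>)"
proof (induction s arbitrary: P g)
  case (Var x)
  then have "P = {} \<or> P = {[]}" by (auto simp: subset_singleton_iff)
  then show ?case by auto
next
  case (Fun f ss)
  then have "\<And>i. i < length ss \<Longrightarrow> {q. i # q \<in> P} \<subseteq> poss (ss ! i)"
    by auto
  with Fun.IH show ?case
    by (cases "[] \<in> P") auto
qed

lemma par_replace_split:
  assumes "P \<subseteq> poss s" "pairwise_parallel P" "Q \<subseteq> P"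
  shows "par_replace (par_replace s Q g) (P - Q) g = par_replace s P g"
  using assms
proof (induction s arbitrary: P Q g)
  case (Var x)
  then have "P = {} \<or> P = {[]}" by (auto simp: subset_singleton_iff)
  then show ?case using Var by (cases "Q = {}") (auto simp: subset_singleton_iff)
next
  case (Fun f ss)
  show ?case
  proof (cases "[] \<in> P")
    case True
    then have "P = {[]}" using pairwise_parallel_Nil Fun.prems by blast
    then show ?thesis using Fun.prems by (cases "Q = {}") (auto simp: subset_singleton_iff)
  next
    case False
    have "par_replace (par_replace (ss ! i) {q. i # q \<in> Q} (\<lambda>q. g (i # q))) {q. i # q \<in> P - Q}
        (\<lambda>q. g (i # q)) = par_replace (ss ! i) {q. i # q \<in> P} (\<lambda>q. g (i # q))"
      if i: "i < length ss" for i
    proof -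
      have "{q. i # q \<in> P - Q} = {q. i # q \<in> P} - {q. i # q \<in> Q}" by auto
      then show ?thesis
        by (simp only:) (rule Fun.IH[OF nth_mem[OF i]], use Fun.prems pairwise_parallel_below_Cons i in auto)
    qed
    moreover have "[] \<notin> Q" "[] \<notin> P - Q"
      using False Fun.prems by auto
    ultimately show ?thesis
      using False by auto
  qed
qed

lemma par_step_with_empty: "par_step_with R {} rl s t \<Longrightarrow> t = s"
  by (simp add: par_step_with_def)

lemma par_step_refl: "par_step R {} u u"
  by (simp add: par_step_def par_step_with_def pairwise_parallel_def)

lemma par_step_with_restrict:
  assumes step: "par_step_with R P rl s t" and "Q \<subseteq> P"
  shows "par_step_with R Q rl s (par_replace s Q (\<lambda>p. t |_ p))"
proof -
  from step have P: "P \<subseteq> poss s" "pairwise_parallel P"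
    and rules: "\<forall>p\<in>P. rl p \<in> R \<and> (\<exists>\<mu>. s |_ p = fst (rl p) \<cdot> \<mu> \<and> t |_ p = snd (rl p) \<cdot> \<mu>)"
    by (auto simp: par_step_with_def)
  with \<open>Q \<subseteq> P\<close> have Q: "Q \<subseteq> poss s" "pairwise_parallel Q"
    using pairwise_parallel_subset by auto
  note at = par_replace_at[OF Q, of _ "\<lambda>p. t |_ p"]
  show ?thesis
    unfolding par_step_with_def
  proof (intro conjI)
    show "\<forall>p\<in>Q. rl p \<in> R \<and> (\<exists>\<mu>. s |_ p = fst (rl p) \<cdot> \<mu> \<and>
        par_replace s Q (\<lambda>p. t |_ p) |_ p = snd (rl p) \<cdot> \<mu>)"
      using rules \<open>Q \<subseteq> P\<close> at by auto
    show "par_replace s Q (\<lambda>p. t |_ p) = par_replace s Q (\<lambda>p. par_replace s Q (\<lambda>p. t |_ p) |_ p)"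
      by (rule par_replace_cong) (use at in simp)
  qed (use Q in auto)
qed

lemma par_step_with_remainder:
  assumes step: "par_step_with R P rl s t" and "Q \<subseteq> P"
  shows "par_step_with R (P - Q) rl (par_replace s Q (\<lambda>p. t |_ p)) t"
proof -
  from step have P: "P \<subseteq> poss s" "pairwise_parallel P"
    and rules: "\<forall>p\<in>P. rl p \<in> R \<and> (\<exists>\<mu>. s |_ p = fst (rl p) \<cdot> \<mu> \<and> t |_ p = snd (rl p) \<cdot> \<mu>)"
    and t: "t = par_replace s P (\<lambda>p. t |_ p)"
    by (auto simp: par_step_with_def)
  have at: "p \<in> poss (par_replace s Q (\<lambda>p. t |_ p)) \<and> par_replace s Q (\<lambda>p. t |_ p) |_ p = s |_ p"
    if "p \<in> P - Q" for p
    using that \<open>Q \<subseteq> P\<close> P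
    by (intro par_replace_parallel) (auto simp: pairwise_parallel_def parallel_pos_def)
  show ?thesis
    unfolding par_step_with_def
  proof (intro conjI)
    show "P - Q \<subseteq> poss (par_replace s Q (\<lambda>p. t |_ p))"
      using at by auto
    show "pairwise_parallel (P - Q)"
      using pairwise_parallel_subset[OF P(2)] by blast
    show "\<forall>p\<in>P - Q. rl p \<in> R \<and> (\<exists>\<mu>. par_replace s Q (\<lambda>p. t |_ p) |_ p = fst (rl p) \<cdot> \<mu> \<and>
        t |_ p = snd (rl p) \<cdot> \<mu>)"
      using at rules by auto
    show "t = par_replace (par_replace s Q (\<lambda>p. t |_ p)) (P - Q) (\<lambda>p. t |_ p)"
      using par_replace_split[OF P \<open>Q \<subseteq> P\<close>] t by simp
  qed
qed

lemma par_step_with_subt_at: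
  assumes step: "par_step_with R P rl s t"
    and q: "q \<in> poss s" "\<forall>p\<in>P. prefix_pos p q \<longrightarrow> p = q"
  shows "par_step_with R {p. q @ p \<in> P} (\<lambda>p. rl (q @ p)) (s |_ q) (t |_ q)"
proof -
  from step have P: "P \<subseteq> poss s" "pairwise_parallel P"
    and rules: "\<forall>p\<in>P. rl p \<in> R \<and> (\<exists>\<mu>. s |_ p = fst (rl p) \<cdot> \<mu> \<and> t |_ p = snd (rl p) \<cdot> \<mu>)"
    and t: "t = par_replace s P (\<lambda>p. t |_ p)"
    by (auto simp: par_step_with_def)
  have "t |_ q = par_replace (s |_ q) {p. q @ p \<in> P} (\<lambda>p. t |_ q |_ p)"
    using par_replace_subt_at[OF q, of "\<lambda>p. t |_ p"] t by (simp add: subt_at_append)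
  moreover have "\<forall>p\<in>{p. q @ p \<in> P}. rl (q @ p) \<in> R \<and>
      (\<exists>\<mu>. s |_ q |_ p = fst (rl (q @ p)) \<cdot> \<mu> \<and> t |_ q |_ p = snd (rl (q @ p)) \<cdot> \<mu>)"
    using rules by (simp flip: subt_at_append)
  ultimately show ?thesis
    unfolding par_step_with_def
    using P pairwise_parallel_below[OF P(2)] by (auto simp: append_in_poss_iff)
qed

lemma par_step_with_vars_at:
  assumes "par_step_with R P rl s t"
    and "\<forall>p\<in>P. vars_term (snd (rl p)) \<subseteq> vars_term (fst (rl p))"
  shows "vars_at t P \<subseteq> vars_at s P"
proof
  fix y assume "y \<in> vars_at t P"
  then obtain p where p: "p \<in> P" "y \<in> vars_term (t |_ p)"
    by (auto simp: vars_at_def)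
  from assms(1) p(1) obtain \<mu> where "s |_ p = fst (rl p) \<cdot> \<mu>" "t |_ p = snd (rl p) \<cdot> \<mu>"
    by (auto simp: par_step_with_def)
  with p assms(2) have "y \<in> vars_term (s |_ p)"
    by (auto simp: vars_term_subst)
  with p show "y \<in> vars_at s P"
    by (auto simp: vars_at_def)
qed

lemma par_step_with_Fun:
  assumes "length ts = length ss"
    and "\<forall>i<length ss. par_step_with R (PP i) (RL i) (ss ! i) (ts ! i)"
  shows "par_step_with R (\<Union>i<length ss. (#) i ` PP i) (\<lambda>p. RL (hd p) (tl p)) (Fun f ss) (Fun f ts)"
proof -
  let ?P = "\<Union>i<length ss. (#) i ` PP i"
  from assms(2) have P: "\<And>i. i < length ss \<Longrightarrow> PP i \<subseteq> poss (ss ! i) \<and> pairwise_parallel (PP i) \<and>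
     (\<forall>p\<in>PP i. RL i p \<in> R \<and> (\<exists>\<mu>. ss ! i |_ p = fst (RL i p) \<cdot> \<mu> \<and> ts ! i |_ p = snd (RL i p) \<cdot> \<mu>)) \<and>
     ts ! i = par_replace (ss ! i) (PP i) (\<lambda>p. ts ! i |_ p)"
    by (auto simp: par_step_with_def)
  have "pairwise_parallel ?P"
    unfolding pairwise_parallel_def
  proof (intro ballI impI)
    fix p q assume "p \<in> ?P" "q \<in> ?P" "p \<noteq> q"
    then obtain i j p' q' where "p = i # p'" "q = j # q'" "p' \<in> PP i" "q' \<in> PP j" "i < length ss"
      by auto
    then show "parallel_pos p q"
      using P \<open>p \<noteq> q\<close> by (cases "i = j") (auto simp: parallel_pos_def pairwise_parallel_def)
  qed
  moreover have "Fun f ts = par_replace (Fun f ss) ?P (\<lambda>p. Fun f ts |_ p)"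
  proof -
    have "map (\<lambda>i. par_replace (ss ! i) {q. i # q \<in> ?P} (\<lambda>q. Fun f ts |_ (i # q))) [0..<length ss]
        = ts"
    proof (rule nth_equalityI)
      fix i assume "i < length (map (\<lambda>i. par_replace (ss ! i) {q. i # q \<in> ?P}
        (\<lambda>q. Fun f ts |_ (i # q))) [0..<length ss])"
      then have i: "i < length ss" by simp
      moreover have "{q. i # q \<in> ?P} = PP i"
        using i by auto
      ultimately show "map (\<lambda>i. par_replace (ss ! i) {q. i # q \<in> ?P} (\<lambda>q. Fun f ts |_ (i # q)))
          [0..<length ss] ! i = ts ! i"
        using P[OF i] by simp
    qed (use assms(1) in simp)
    moreover have "[] \<notin> ?P" by auto
    ultimately show ?thesis
      using par_replace_Fun[of ?P f ss "\<lambda>p. Fun f ts |_ p"] by simp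
  qed
  moreover have "PP i \<subseteq> poss (ss ! i)" if "i < length ss" for i
    using P[OF that] by blast
  then have "?P \<subseteq> poss (Fun f ss)"
    by fastforce
  moreover have "\<forall>p\<in>?P. RL (hd p) (tl p) \<in> R \<and> (\<exists>\<mu>. Fun f ss |_ p = fst (RL (hd p) (tl p)) \<cdot> \<mu> \<and>
      Fun f ts |_ p = snd (RL (hd p) (tl p)) \<cdot> \<mu>)"
    using P by auto
  ultimately show ?thesis
    unfolding par_step_with_def by blast
qed

lemma par_step_with_subst:
  assumes "\<forall>x\<in>vars_term r. \<exists>Q rl. par_step_with R Q rl (\<mu> x) (\<rho> x) \<and> vars_at (\<rho> x) Q \<subseteq> V"
  shows "\<exists>P rl. par_step_with R P rl (r \<cdot> \<mu>) (r \<cdot> \<rho>) \<and> vars_at (r \<cdot> \<rho>) P \<subseteq> V"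
  using assms
proof (induction r)
  case (Fun f rs)
  have "\<forall>i<length rs. \<exists>Q rl. par_step_with R Q rl (rs ! i \<cdot> \<mu>) (rs ! i \<cdot> \<rho>) \<and>
      vars_at (rs ! i \<cdot> \<rho>) Q \<subseteq> V"
    using Fun by (metis UN_I nth_mem vars_term.simps(2))
  then obtain PP RL where PP: "\<forall>i<length rs. par_step_with R (PP i) (RL i) (rs ! i \<cdot> \<mu>) (rs ! i \<cdot> \<rho>) \<and>
      vars_at (rs ! i \<cdot> \<rho>) (PP i) \<subseteq> V"
    by metis
  let ?ss = "map (\<lambda>t. t \<cdot> \<mu>) rs" and ?ts = "map (\<lambda>t. t \<cdot> \<rho>) rs"
  have "\<forall>i<length ?ss. par_step_with R (PP i) (RL i) (?ss ! i) (?ts ! i)"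
    using PP by simp
  from par_step_with_Fun[OF _ this, of f]
  have "par_step_with R (\<Union>i<length rs. (#) i ` PP i) (\<lambda>p. RL (hd p) (tl p)) (Fun f rs \<cdot> \<mu>) (Fun f rs \<cdot> \<rho>)"
    by simp
  moreover have "vars_at (Fun f rs \<cdot> \<rho>) (\<Union>i<length rs. (#) i ` PP i) \<subseteq> V"
  proof
    fix y assume "y \<in> vars_at (Fun f rs \<cdot> \<rho>) (\<Union>i<length rs. (#) i ` PP i)"
    then obtain i p where "i < length rs" "p \<in> PP i" "y \<in> vars_term (rs ! i \<cdot> \<rho> |_ p)"
      by (auto simp: vars_at_def)
    then show "y \<in> V"
      using PP by (auto simp: vars_at_def)
  qed
  ultimately show ?case by blast
qed auto

section \<open>Instances of left-linear patterns\<close>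

lemma left_linear_term_arg:
  assumes ll: "left_linear_term (Fun f ls)" and i: "i < length ls"
  shows "left_linear_term (ls ! i)"
  unfolding left_linear_term_def
proof (intro ballI allI impI)
  fix p q x
  assume "p \<in> poss (ls ! i)" "q \<in> poss (ls ! i)" "ls ! i |_ p = Var x \<and> ls ! i |_ q = Var x"
  with ll[unfolded left_linear_term_def, rule_format, of "i # p" "i # q" x] i
  show "p = q" by simp
qed

lemma left_linear_term_args_vars_disjoint:
  assumes ll: "left_linear_term (Fun f ls)" and "i < length ls" "j < length ls" "i \<noteq> j"
  shows "vars_term (ls ! i) \<inter> vars_term (ls ! j) = {}"
proof (rule ccontr)
  assume "vars_term (ls ! i) \<inter> vars_term (ls ! j) \<noteq> {}"
  then obtain y where y: "y \<in> vars_term (ls ! i)" "y \<in> vars_term (ls ! j)"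
    by blast
  obtain qi where "qi \<in> poss (ls ! i)" "ls ! i |_ qi = Var y"
    using var_pos_exists[OF y(1)] by blast
  moreover obtain qj where "qj \<in> poss (ls ! j)" "ls ! j |_ qj = Var y"
    using var_pos_exists[OF y(2)] by blast
  ultimately have "i # qi = j # qj"
    using ll[unfolded left_linear_term_def, rule_format, of "i # qi" "j # qj" y] assms(2,3) by simp
  with \<open>i \<noteq> j\<close> show False by simp
qed

lemma par_replace_linear_instance:
  assumes "left_linear_term l" "Q \<subseteq> poss (l \<cdot> \<mu>)" "Q \<inter> fun_poss l = {}"
  shows "\<exists>\<rho>. par_replace (l \<cdot> \<mu>) Q g = l \<cdot> \<rho>"
  using assms
proof (induction l arbitrary: Q g)
  case (Var x)
  show ?case
    by (rule exI[of _ "\<lambda>y. par_replace (\<mu> y) Q g"]) simp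
next
  case (Fun f ls)
  have "\<exists>\<rho>. par_replace (ls ! i \<cdot> \<mu>) {q. i # q \<in> Q} (\<lambda>q. g (i # q)) = ls ! i \<cdot> \<rho>"
    if i: "i < length ls" for i
    by (rule Fun.IH[OF nth_mem[OF i] left_linear_term_arg[OF Fun.prems(1) i]])
      (use Fun.prems i in auto)
  then obtain \<rho>s where \<rho>s: "\<And>i. i < length ls \<Longrightarrow>
      par_replace (ls ! i \<cdot> \<mu>) {q. i # q \<in> Q} (\<lambda>q. g (i # q)) = ls ! i \<cdot> \<rho>s i"
    by metis
  have "\<forall>i\<in>{..<length ls}. \<forall>j\<in>{..<length ls}. i \<noteq> j \<longrightarrow> vars_term (ls ! i) \<inter> vars_term (ls ! j) = {}"
    using left_linear_term_args_vars_disjoint[OF Fun.prems(1)] by auto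
  then obtain \<rho> where \<rho>: "\<And>i x. i \<in> {..<length ls} \<Longrightarrow> x \<in> vars_term (ls ! i) \<Longrightarrow> \<rho> x = \<rho>s i x"
    by (rule subst_glue[where \<sigma> = \<rho>s]) (rule that)
  have "[] \<notin> Q"
    using Fun.prems(3) by auto
  then have "par_replace (Fun f ls \<cdot> \<mu>) Q g = Fun f (map (\<lambda>i. ls ! i \<cdot> \<rho>) [0..<length ls])"
    using \<rho>s \<rho> by (auto intro!: term_subst_eq)
  also have "\<dots> = Fun f ls \<cdot> \<rho>"
  proof -
    have "map (\<lambda>i. ls ! i \<cdot> \<rho>) [0..<length ls] = map (\<lambda>t. t \<cdot> \<rho>) ls"
      by (rule nth_equalityI) simp_all
    then show ?thesis
      by (simp only: subst_apply.simps)
  qed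
  finally show ?case
    by blast
qed

lemma par_step_with_linear_instance:
  assumes ll: "left_linear_term l"
    and step: "par_step_with R Q rl (l \<cdot> \<mu>) t"
    and below: "Q \<inter> fun_poss l = {}"
  obtains \<rho> where "t = l \<cdot> \<rho>"
    and "\<And>q x. q \<in> poss l \<Longrightarrow> l |_ q = Var x \<Longrightarrow>
      par_step_with R {p. q @ p \<in> Q} (\<lambda>p. rl (q @ p)) (\<mu> x) (\<rho> x)"
proof -
  from step have "Q \<subseteq> poss (l \<cdot> \<mu>)" "t = par_replace (l \<cdot> \<mu>) Q (\<lambda>p. t |_ p)"
    by (auto simp: par_step_with_def)
  then obtain \<rho> where t: "t = l \<cdot> \<rho>"
    using par_replace_linear_instance[OF ll _ below] by metis
  have "par_step_with R {p. q @ p \<in> Q} (\<lambda>p. rl (q @ p)) (\<mu> x) (\<rho> x)"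
    if q: "q \<in> poss l" "l |_ q = Var x" for q x
  proof -
    have "\<forall>p\<in>Q. prefix_pos p q \<longrightarrow> p = q"
      using prefix_of_var_pos_in_fun_poss[OF q] below by blast
    from par_step_with_subt_at[OF step poss_imp_subst_poss[OF q(1)] this]
    show ?thesis
      using q t by (simp add: subt_at_subst)
  qed
  with t show thesis
    using that by blast
qed

section \<open>Renaming apart\<close>

definition rename_rule :: "('v \<Rightarrow> 'v) \<Rightarrow> ('f, 'v) rule \<Rightarrow> ('f, 'v) rule" where
  "rename_rule \<pi> lr = (fst lr \<cdot> (Var \<circ> \<pi>), snd lr \<cdot> (Var \<circ> \<pi>))"

lemma rule_vars_rename_rule: "rule_vars (rename_rule \<pi> lr) = \<pi> ` rule_vars lr"
  by (auto simp: rule_vars_def rename_rule_def vars_term_subst)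

lemma subst_rename_comp_inv:
  fixes \<pi> :: "'v \<Rightarrow> 'v" and t :: "('f, 'v) term"
  shows "bij \<pi> \<Longrightarrow> t \<cdot> (Var \<circ> \<pi>) \<cdot> (\<sigma> \<circ> inv \<pi>) = t \<cdot> \<sigma>"
  by (simp add: subst_subst_comp subst_comp_def comp_def bij_is_inj)

lemma subst_rename_rename:
  fixes \<pi> \<pi>' :: "'v \<Rightarrow> 'v" and t :: "('f, 'v) term"
  shows "t \<cdot> (Var \<circ> \<pi>) \<cdot> (Var \<circ> \<pi>') = t \<cdot> (Var \<circ> (\<pi>' \<circ> \<pi>))"
  by (simp add: subst_subst_comp subst_comp_def comp_def)

lemma variant_rename_rule: "bij \<pi> \<Longrightarrow> variant (rename_rule \<pi> lr) lr"
  unfolding variant_def rename_rule_def by (intro exI[of _ \<pi>]) simp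

lemma variant_of_rename_rule:
  fixes lr lr' :: "('f, 'v) rule" and \<pi> :: "'v \<Rightarrow> 'v"
  assumes "bij \<pi>" and "variant (rename_rule \<pi> lr) lr'"
  shows "variant lr lr'"
proof -
  from assms(2) obtain \<psi> where \<psi>: "bij \<psi>" "fst lr \<cdot> (Var \<circ> \<pi>) = fst lr' \<cdot> (Var \<circ> \<psi>)"
    "snd lr \<cdot> (Var \<circ> \<pi>) = snd lr' \<cdot> (Var \<circ> \<psi>)"
    by (auto simp: variant_def rename_rule_def)
  have undo_rename: "t \<cdot> (Var \<circ> \<pi>) \<cdot> (Var \<circ> inv \<pi>) = t" for t :: "('f, 'v) term"
    using subst_rename_comp_inv[OF assms(1), of t Var] by (simp add: comp_def)
  have "fst lr = fst lr' \<cdot> (Var \<circ> (inv \<pi> \<circ> \<psi>))"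
    using undo_rename[of "fst lr"] by (simp add: \<psi>(2) subst_rename_rename)
  moreover have "snd lr = snd lr' \<cdot> (Var \<circ> (inv \<pi> \<circ> \<psi>))"
    using undo_rename[of "snd lr"] by (simp add: \<psi>(3) subst_rename_rename)
  moreover have "bij (inv \<pi> \<circ> \<psi>)"
    using assms(1) \<psi>(1) by (simp add: bij_comp bij_imp_bij_inv)
  ultimately show ?thesis
    unfolding variant_def by blast
qed

lemma bij_rename_away:
  assumes "infinite (UNIV :: 'v set)" "finite (A :: 'v set)" "finite (U :: 'v set)"
  obtains \<pi> where "bij \<pi>" "\<pi> ` A \<inter> U = {}"
proof -
  have "infinite (UNIV - (A \<union> U))"
    using assms by auto
  then obtain B where B: "B \<subseteq> UNIV - (A \<union> U)" "finite B" "card B = card A"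
    using infinite_arbitrarily_large by blast
  obtain h where h: "bij_betw h A B"
    using finite_same_card_bij[OF assms(2) B(2) B(3)[symmetric]] by blast
  define \<pi> where "\<pi> x = (if x \<in> A then h x else if x \<in> B then inv_into A h x else x)" for x
  have involution: "\<pi> (\<pi> x) = x" for x
  proof -
    consider "x \<in> A" | "x \<in> B" | "x \<notin> A" "x \<notin> B"
      by blast
    then show ?thesis
    proof cases
      case 1
      then have "h x \<in> B" "h x \<notin> A"
        using h B(1) by (auto simp: bij_betw_def)
      with 1 h show ?thesis
        by (auto simp: \<pi>_def bij_betw_def)
    next
      case 2
      then have "inv_into A h x \<in> A" "h (inv_into A h x) = x" "x \<notin> A"
        using h B(1) by (auto simp: bij_betw_def inv_into_into f_inv_into_f)
      then show ?thesis
        by (simp add: \<pi>_def)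
    qed (simp add: \<pi>_def)
  qed
  then have "bij \<pi>"
    by (intro o_bij[of \<pi> \<pi>]) (auto simp: involution)
  moreover have "\<pi> ` A = B"
    using h by (auto simp: \<pi>_def bij_betw_def)
  ultimately show thesis
    using that B(1) by blast
qed

lemma bij_rename_family_apart:
  assumes "infinite (UNIV :: 'v set)" "finite I" "\<forall>i\<in>I. finite (W i :: 'v set)" "finite (U :: 'v set)"
  shows "\<exists>\<pi>. (\<forall>i\<in>I. bij (\<pi> i)) \<and> (\<forall>i\<in>I. \<pi> i ` W i \<inter> U = {}) \<and>
     (\<forall>i\<in>I. \<forall>j\<in>I. i \<noteq> j \<longrightarrow> \<pi> i ` W i \<inter> \<pi> j ` W j = {})"
  using assms(2,3)
proof (induction I rule: finite_induct)
  case (insert k F)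
  then obtain \<pi> where \<pi>: "\<forall>i\<in>F. bij (\<pi> i)" "\<forall>i\<in>F. \<pi> i ` W i \<inter> U = {}"
     "\<forall>i\<in>F. \<forall>j\<in>F. i \<noteq> j \<longrightarrow> \<pi> i ` W i \<inter> \<pi> j ` W j = {}"
    by auto
  obtain \<pi>k where k: "bij \<pi>k" "\<pi>k ` W k \<inter> (U \<union> (\<Union>i\<in>F. \<pi> i ` W i)) = {}"
    using bij_rename_away[OF assms(1), of "W k" "U \<union> (\<Union>i\<in>F. \<pi> i ` W i)"] insert assms(4)
    by auto
  have "\<forall>i\<in>insert k F. \<forall>j\<in>insert k F. i \<noteq> j \<longrightarrow>
      (\<pi>(k := \<pi>k)) i ` W i \<inter> (\<pi>(k := \<pi>k)) j ` W j = {}"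
  proof (intro ballI impI)
    fix i j assume "i \<in> insert k F" "j \<in> insert k F" "i \<noteq> j"
    then consider "i = k" "j \<in> F" | "j = k" "i \<in> F" | "i \<in> F" "j \<in> F"
      by blast
    then show "(\<pi>(k := \<pi>k)) i ` W i \<inter> (\<pi>(k := \<pi>k)) j ` W j = {}"
    proof cases
      case 1
      then show ?thesis using k(2) insert.hyps(2) by auto
    next
      case 2
      then show ?thesis using k(2) insert.hyps(2) by auto
    next
      case 3
      then show ?thesis using \<pi>(3) \<open>i \<noteq> j\<close> insert.hyps(2) by auto
    qed
  qed
  then show ?case
    using \<pi> k insert.hyps(2) by (intro exI[of _ "\<pi>(k := \<pi>k)"]) auto
qed simp

section \<open>Most general unifiers\<close>

definition eqs_vars :: "(('f, 'v) term \<times> ('f, 'v) term) set \<Rightarrow> 'v set" where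
  "eqs_vars E = (\<Union>(a, b)\<in>E. vars_term a \<union> vars_term b)"

definition mgu_within :: "(('f, 'v) term \<times> ('f, 'v) term) set \<Rightarrow> ('f, 'v) subst \<Rightarrow> bool" where
  "mgu_within E \<sigma> \<longleftrightarrow> mgu E \<sigma> \<and> (\<forall>z. z \<notin> eqs_vars E \<longrightarrow> \<sigma> z = Var z) \<and>
     (\<forall>z\<in>eqs_vars E. vars_term (\<sigma> z) \<subseteq> eqs_vars E)"

lemma finite_eqs_vars: "finite E \<Longrightarrow> finite (eqs_vars E)"
  by (auto simp: eqs_vars_def)

lemma mgu_within_cong:
  assumes "\<And>\<theta>. unifier E \<theta> \<longleftrightarrow> unifier E' \<theta>" "eqs_vars E' \<subseteq> eqs_vars E" "mgu_within E' \<sigma>"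
  shows "mgu_within E \<sigma>"
  using assms by (auto simp: mgu_within_def mgu_def) (metis singletonD subsetD vars_term.simps(1))

lemma unifier_subst_eqs_iff:
  "unifier ((\<lambda>(a, b). (a \<cdot> \<sigma>, b \<cdot> \<sigma>)) ` E) \<theta> \<longleftrightarrow> unifier E (subst_comp \<sigma> \<theta>)"
  by (auto simp: unifier_def subst_subst_comp)

lemma eqs_vars_subst_eliminate:
  "x \<notin> vars_term t \<Longrightarrow>
    eqs_vars ((\<lambda>(a, b). (a \<cdot> Var(x := t), b \<cdot> Var(x := t))) ` E) \<subseteq> eqs_vars (insert (Var x, t) E) - {x}"
  by (fastforce simp: eqs_vars_def vars_term_subst split: if_splits)

lemma unifier_decompose_iff:
  "length ss = length ts \<Longrightarrow>
    unifier (insert (Fun f ss, Fun f ts) E) \<theta> \<longleftrightarrow> unifier (set (zip ss ts) \<union> E) \<theta>"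
  by (induction ss ts rule: list_induct2) (auto simp: unifier_def)

lemma eqs_vars_decompose:
  "length ss = length ts \<Longrightarrow>
    eqs_vars (insert (Fun f ss, Fun g ts) E) = eqs_vars (set (zip ss ts) \<union> E)"
  by (induction ss ts rule: list_induct2) (auto simp: eqs_vars_def)

lemma size_list_zip_le:
  "length ss = length ts \<Longrightarrow>
    size_list (\<lambda>(a, b). size a + size b) (zip ss ts) \<le> size_list size ss + size_list size ts"
  by (induction ss ts rule: list_induct2) auto

lemma size_subst_var_less:
  "x \<in> vars_term t \<Longrightarrow> t \<noteq> Var x \<Longrightarrow> size (\<theta> x) < size (t \<cdot> \<theta>)"
proof (induction t)
  case (Fun f ts)
  then obtain u where u: "u \<in> set ts" "x \<in> vars_term u"
    by auto
  have "size (\<theta> x) \<le> size (u \<cdot> \<theta>)"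
    using Fun.IH[OF u] u by (cases "u = Var x") auto
  also have "size (u \<cdot> \<theta>) < size (Fun f ts \<cdot> \<theta>)"
    using u(1) by (simp add: size_list_estimation' le_imp_less_Suc)
  finally show ?case .
qed auto

lemma mgu_within_eliminate:
  fixes E :: "(('f, 'v) term \<times> ('f, 'v) term) set" and x :: 'v and t :: "('f, 'v) term"
  defines "\<eta> \<equiv> Var(x := t)"
  assumes x: "x \<notin> vars_term t"
    and mgu: "mgu_within ((\<lambda>(a, b). (a \<cdot> \<eta>, b \<cdot> \<eta>)) ` E) \<sigma>"
  shows "mgu_within (insert (Var x, t) E) (subst_comp \<eta> \<sigma>)"
proof -
  let ?E = "(\<lambda>(a, b). (a \<cdot> \<eta>, b \<cdot> \<eta>)) ` E"
  have t\<eta>: "t \<cdot> \<eta> = t"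
    using x by (auto simp: \<eta>_def intro!: trans[OF term_subst_eq subst_apply_Var_ident])
  have absorb: "subst_comp \<eta> \<theta> = \<theta>" if "\<theta> x = t \<cdot> \<theta>" for \<theta>
    using that by (auto simp: subst_comp_def \<eta>_def)
  note unif_E = unifier_subst_eqs_iff[of \<eta> E]
  have vars_E: "eqs_vars ?E \<subseteq> eqs_vars (insert (Var x, t) E) - {x}"
    using eqs_vars_subst_eliminate[OF x] by (simp add: \<eta>_def)
  from mgu have "unifier ?E \<sigma>"
    by (simp add: mgu_within_def mgu_def)
  moreover have "t \<cdot> subst_comp \<eta> \<sigma> = t \<cdot> \<sigma>"
    by (simp add: t\<eta> flip: subst_subst_comp)
  then have "subst_comp \<eta> \<sigma> x = t \<cdot> subst_comp \<eta> \<sigma>"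
    by (simp add: subst_comp_def \<eta>_def)
  ultimately have unifies: "unifier (insert (Var x, t) E) (subst_comp \<eta> \<sigma>)"
    using unif_E by (simp add: unifier_def)
  have most_general: "\<exists>\<delta>. \<theta> = subst_comp (subst_comp \<eta> \<sigma>) \<delta>"
    if "unifier (insert (Var x, t) E) \<theta>" for \<theta>
  proof -
    from that have "\<theta> x = t \<cdot> \<theta>" "unifier E \<theta>"
      by (auto simp: unifier_def)
    then have "unifier ?E \<theta>"
      using unif_E absorb by simp
    then obtain \<delta> where "\<theta> = subst_comp \<sigma> \<delta>"
      using mgu by (auto simp: mgu_within_def mgu_def)
    then show ?thesis
      using absorb[OF \<open>\<theta> x = t \<cdot> \<theta>\<close>] by (metis subst_comp_assoc)
  qed
  have "vars_term (subst_comp \<eta> \<sigma> z) \<subseteq> eqs_vars (insert (Var x, t) E)"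
    if "z \<in> eqs_vars (insert (Var x, t) E)" for z
  proof -
    have "vars_term (\<sigma> y) \<subseteq> eqs_vars (insert (Var x, t) E)"
      if "y \<in> eqs_vars (insert (Var x, t) E)" for y
      using mgu vars_E that by (cases "y \<in> eqs_vars ?E") (auto simp: mgu_within_def)
    moreover have "vars_term (\<eta> z) \<subseteq> eqs_vars (insert (Var x, t) E)"
      using that by (auto simp: \<eta>_def eqs_vars_def)
    ultimately show ?thesis
      by (auto simp: subst_comp_def vars_term_subst)
  qed
  moreover have "subst_comp \<eta> \<sigma> z = Var z" if "z \<notin> eqs_vars (insert (Var x, t) E)" for z
  proof -
    have "z \<noteq> x"
      using that by (simp add: eqs_vars_def)
    moreover have "z \<notin> eqs_vars ?E"
      using that vars_E by blast
    ultimately show ?thesis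
      using mgu by (simp add: subst_comp_def \<eta>_def mgu_within_def)
  qed
  ultimately show ?thesis
    using unifies most_general by (simp add: mgu_within_def mgu_def)
qed

lemma unifier_eliminate:
  assumes "unifier (insert (Var x, t) E) \<theta>" "t \<noteq> Var x"
  shows "x \<notin> vars_term t" "unifier ((\<lambda>(a, b). (a \<cdot> Var(x := t), b \<cdot> Var(x := t))) ` E) \<theta>"
proof -
  from assms(1) have "\<theta> x = t \<cdot> \<theta>" "unifier E \<theta>"
    by (auto simp: unifier_def)
  then show "x \<notin> vars_term t"
    using size_subst_var_less[OF _ assms(2), of \<theta>] by auto
  have "subst_comp (Var(x := t)) \<theta> = \<theta>"
    using \<open>\<theta> x = t \<cdot> \<theta>\<close> by (auto simp: subst_comp_def)
  with \<open>unifier E \<theta>\<close> show "unifier ((\<lambda>(a, b). (a \<cdot> Var(x := t), b \<cdot> Var(x := t))) ` E) \<theta>"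
    by (simp add: unifier_subst_eqs_iff)
qed

lemma card_eqs_vars_eliminate:
  assumes "finite E" "x \<notin> vars_term t"
  shows "card (eqs_vars ((\<lambda>(a, b). (a \<cdot> Var(x := t), b \<cdot> Var(x := t))) ` E)) <
    card (eqs_vars (insert (Var x, t) E))"
proof (rule psubset_card_mono)
  show "finite (eqs_vars (insert (Var x, t) E))"
    using assms(1) by (simp add: finite_eqs_vars)
  have "x \<in> eqs_vars (insert (Var x, t) E)"
    by (simp add: eqs_vars_def)
  then show "eqs_vars ((\<lambda>(a, b). (a \<cdot> Var(x := t), b \<cdot> Var(x := t))) ` E) \<subset>
      eqs_vars (insert (Var x, t) E)"
    using eqs_vars_subst_eliminate[OF assms(2)] by blast
qed

(* Martelli-Montanari: eliminating a variable removes it from the problem, deleting a trivial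
   equation or decomposing one does not add variables and makes the problem smaller. *)
lemma mgu_within_exists_list:
  fixes E :: "(('f, 'v) term \<times> ('f, 'v) term) list"
  shows "\<exists>\<theta>. unifier (set E) \<theta> \<Longrightarrow> \<exists>\<sigma>. mgu_within (set E) \<sigma>"
proof (induction E rule: wf_induct[OF wf_measures,
      of "[\<lambda>E. card (eqs_vars (set E)), size_list (\<lambda>(a, b). size a + size b)]"])
  case (1 E)
  let ?card = "\<lambda>E :: (('f, 'v) term \<times> ('f, 'v) term) list. card (eqs_vars (set E))"
    and ?size = "size_list (\<lambda>(a, b). size a + size b)"
  have IH: "\<exists>\<sigma>. mgu_within (set E') \<sigma>"
    if "?card E' < ?card E \<or> ?card E' \<le> ?card E \<and> ?size E' < ?size E" "unifier (set E') \<theta>" for E' \<theta>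
    using 1(1) that unfolding le_less by auto
  from 1(2) obtain \<theta> where \<theta>: "unifier (set E) \<theta>"
    by blast
  have card_mono: "?card E' \<le> ?card E" if "eqs_vars (set E') \<subseteq> eqs_vars (set E)" for E'
    using that by (simp add: card_mono finite_eqs_vars)
  show ?case
  proof (cases E)
    case Nil
    then have "mgu_within (set E) Var"
      by (auto simp: mgu_within_def mgu_def unifier_def subst_comp_def eqs_vars_def)
    then show ?thesis by blast
  next
    case (Cons ab E')
    obtain a b where ab: "ab = (a, b)"
      by fastforce
    have E: "set E = insert (a, b) (set E')"
      by (simp add: Cons ab)
    have eliminate: "\<exists>\<sigma>. mgu_within (insert (Var x, t) (set E')) \<sigma>"
      if "t \<noteq> Var x" "unifier (insert (Var x, t) (set E')) \<theta>"
        and vars: "eqs_vars (insert (Var x, t) (set E')) = eqs_vars (set E)" for x t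
    proof -
      let ?E = "map (\<lambda>(a, b). (a \<cdot> Var(x := t), b \<cdot> Var(x := t))) E'"
      note x = unifier_eliminate[OF that(2,1)]
      have "?card ?E < ?card E"
        using card_eqs_vars_eliminate[OF finite_set x(1), of E'] vars by simp
      with x(2) obtain \<sigma> where "mgu_within (set ?E) \<sigma>"
        using IH[of ?E \<theta>] by auto
      then show ?thesis
        using mgu_within_eliminate[OF x(1)] by auto
    qed
    consider (trivial) "a = b" | (var_left) x where "a = Var x" "b \<noteq> Var x"
      | (var_right) x where "b = Var x" "a \<noteq> Var x"
      | (decompose) f ss g ts where "a = Fun f ss" "b = Fun g ts"
      by (cases a; cases b) auto
    then show ?thesis
    proof cases
      case trivial
      have "eqs_vars (set E') \<subseteq> eqs_vars (set E)"
        by (auto simp: E eqs_vars_def)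
      moreover have "?size E' < ?size E"
        by (simp add: Cons)
      moreover have "unifier (set E') \<theta>"
        using \<theta> by (simp add: E unifier_def)
      ultimately obtain \<sigma> where "mgu_within (set E') \<sigma>"
        using IH card_mono by blast
      then show ?thesis
        using \<open>eqs_vars (set E') \<subseteq> eqs_vars (set E)\<close> trivial
        by (intro exI mgu_within_cong[of "set E" "set E'"]) (auto simp: E unifier_def)
    next
      case var_left
      then show ?thesis
        using eliminate[of b x] \<theta> by (simp add: E)
    next
      case var_right
      have swap: "unifier (insert (Var x, a) (set E')) \<theta>' \<longleftrightarrow> unifier (set E) \<theta>'" for \<theta>'
        by (auto simp: E var_right unifier_def)
      moreover have "eqs_vars (insert (Var x, a) (set E')) = eqs_vars (set E)"
        by (auto simp: E var_right eqs_vars_def)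
      ultimately show ?thesis
        using eliminate[of a x] \<theta> var_right mgu_within_cong[of "set E" "insert (Var x, a) (set E')"]
        by blast
    next
      case decompose
      from \<theta> have "f = g" and len: "length ss = length ts"
        by (auto simp: E decompose unifier_def dest: map_eq_imp_length_eq)
      let ?E = "zip ss ts @ E'"
      have unif: "unifier (set ?E) \<theta>' \<longleftrightarrow> unifier (set E) \<theta>'" for \<theta>'
        using unifier_decompose_iff[OF len] by (simp add: E decompose \<open>f = g\<close> Un_commute)
      moreover have vars: "eqs_vars (set ?E) = eqs_vars (set E)"
        using eqs_vars_decompose[OF len] by (simp add: E decompose Un_commute)
      moreover have "?size ?E < ?size E"
        using size_list_zip_le[OF len] by (simp add: Cons ab decompose)
      ultimately obtain \<sigma> where "mgu_within (set ?E) \<sigma>"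
        using IH[of ?E \<theta>] \<theta> by auto
      then show ?thesis
        using unif vars mgu_within_cong[of "set E" "set ?E"] by blast
    qed
  qed
qed

lemma mgu_within_exists: "finite E \<Longrightarrow> unifier E \<theta> \<Longrightarrow> \<exists>\<sigma>. mgu_within E \<sigma>"
  using mgu_within_exists_list finite_list by metis

section \<open>Orthogonal peaks\<close>

lemma vars_at_subt_at_below:
  "q \<in> poss t \<Longrightarrow> vars_at (t |_ q) {p. q @ p \<in> P} \<subseteq> vars_at t P"
  by (auto simp: vars_at_def subt_at_append)

lemma par_step_below_vars_joinable:
  assumes vars: "vars_term r \<subseteq> vars_term l" and ll: "left_linear_term l"
    and step: "par_step_with R P rl (l \<cdot> \<mu>) t" and below: "P \<inter> fun_poss l = {}"
    and wf: "\<forall>p\<in>P. vars_term (snd (rl p)) \<subseteq> vars_term (fst (rl p))"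
  shows "\<exists>v P'. root_step {(l, r)} t v \<and> par_step R P' (r \<cdot> \<mu>) v \<and> vars_at v P' \<subseteq> vars_at (l \<cdot> \<mu>) P"
proof -
  obtain \<rho> where t: "t = l \<cdot> \<rho>" and var_step: "\<And>q x. q \<in> poss l \<Longrightarrow> l |_ q = Var x \<Longrightarrow>
      par_step_with R {p. q @ p \<in> P} (\<lambda>p. rl (q @ p)) (\<mu> x) (\<rho> x)"
    by (rule par_step_with_linear_instance[OF ll step below]) (rule that)
  have "\<exists>Q rl'. par_step_with R Q rl' (\<mu> x) (\<rho> x) \<and> vars_at (\<rho> x) Q \<subseteq> vars_at (l \<cdot> \<mu>) P"
    if x: "x \<in> vars_term r" for x
  proof -
    from x vars obtain q where q: "q \<in> poss l" "l |_ q = Var x"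
      using var_pos_exists[of x l] by auto
    have "vars_at (\<rho> x) {p. q @ p \<in> P} \<subseteq> vars_at t P"
      using vars_at_subt_at_below[OF poss_imp_subst_poss[OF q(1)], of \<rho> P] q t
      by (simp add: subt_at_subst)
    also have "\<dots> \<subseteq> vars_at (l \<cdot> \<mu>) P"
      using par_step_with_vars_at[OF step wf] .
    finally show ?thesis
      using var_step[OF q] by blast
  qed
  then have "\<exists>P' rl'. par_step_with R P' rl' (r \<cdot> \<mu>) (r \<cdot> \<rho>) \<and> vars_at (r \<cdot> \<rho>) P' \<subseteq> vars_at (l \<cdot> \<mu>) P"
    by (intro par_step_with_subst) blast
  moreover have "root_step {(l, r)} t (r \<cdot> \<rho>)"
    using t by (auto simp: root_step_def)
  ultimately show ?thesis
    unfolding par_step_def by blast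
qed

lemma variant_instance_rhs:
  assumes "variant lr' (l, r)" "vars_term r \<subseteq> vars_term l" "fst lr' \<cdot> \<mu>' = l \<cdot> \<mu>"
  shows "snd lr' \<cdot> \<mu>' = r \<cdot> \<mu>"
proof -
  from assms(1) obtain \<pi> where \<pi>: "fst lr' = l \<cdot> (Var \<circ> \<pi>)" "snd lr' = r \<cdot> (Var \<circ> \<pi>)"
    by (auto simp: variant_def)
  with assms(3) have "l \<cdot> subst_comp (Var \<circ> \<pi>) \<mu>' = l \<cdot> \<mu>"
    by (simp add: subst_subst_comp)
  then have "r \<cdot> subst_comp (Var \<circ> \<pi>) \<mu>' = r \<cdot> \<mu>"
    using assms(2) by (intro term_subst_eq) (auto intro: term_subst_eq_rev)
  with \<pi>(2) show ?thesis
    by (simp add: subst_subst_comp)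
qed

lemma orthogonal_peak_joinable:
  assumes vars: "vars_term r \<subseteq> vars_term l" and ll: "left_linear_term l"
    and step: "par_step_with R P rl (l \<cdot> \<mu>) t"
    and wf: "\<forall>p\<in>P. vars_term (snd (rl p)) \<subseteq> vars_term (fst (rl p))"
    and orth: "orthogonal_peak (l, r) P rl"
  shows "\<exists>v P'. (t = v \<or> root_step {(l, r)} t v) \<and> par_step R P' (r \<cdot> \<mu>) v \<and>
    vars_at v P' \<subseteq> vars_at (l \<cdot> \<mu>) P"
proof (cases "P \<inter> fun_poss l = {}")
  case True
  then show ?thesis
    using par_step_below_vars_joinable[OF vars ll step _ wf] by blast
next
  case False
  with orth have "P = {[]}" "variant (rl []) (l, r)"
    by (auto simp: orthogonal_peak_def)
  moreover from step \<open>P = {[]}\<close> obtain \<mu>' where "l \<cdot> \<mu> = fst (rl []) \<cdot> \<mu>'" "t = snd (rl []) \<cdot> \<mu>'"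
    by (auto simp: par_step_with_def)
  ultimately have "t = r \<cdot> \<mu>"
    using variant_instance_rhs[OF _ vars, of "rl []" \<mu>' \<mu>] by simp
  then show ?thesis
    using par_step_refl[of R t] by (auto simp: vars_at_def)
qed

section \<open>Non-orthogonal peaks\<close>

lemma renamed_rules_common_matcher:
  fixes U :: "'v set" and rl :: "pos \<Rightarrow> ('f, 'v) rule"
  assumes inf: "infinite (UNIV :: 'v set)" and "finite P0" "finite U"
    and match: "\<forall>p\<in>P0. \<exists>\<mu>. s |_ p = fst (rl p) \<cdot> \<mu> \<and> t |_ p = snd (rl p) \<cdot> \<mu>"
  obtains \<pi> \<theta> where "\<forall>p\<in>P0. bij (\<pi> p)"
    and "\<forall>p\<in>P0. rule_vars (rename_rule (\<pi> p) (rl p)) \<inter> U = {}"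
    and "\<forall>p\<in>P0. \<forall>q\<in>P0. p \<noteq> q \<longrightarrow>
      rule_vars (rename_rule (\<pi> p) (rl p)) \<inter> rule_vars (rename_rule (\<pi> q) (rl q)) = {}"
    and "\<forall>z\<in>U. \<theta> z = \<mu> z"
    and "\<forall>p\<in>P0. fst (rename_rule (\<pi> p) (rl p)) \<cdot> \<theta> = s |_ p \<and> snd (rename_rule (\<pi> p) (rl p)) \<cdot> \<theta> = t |_ p"
proof -
  obtain \<pi> where \<pi>: "\<forall>p\<in>P0. bij (\<pi> p)" "\<forall>p\<in>P0. \<pi> p ` rule_vars (rl p) \<inter> U = {}"
    "\<forall>p\<in>P0. \<forall>q\<in>P0. p \<noteq> q \<longrightarrow> \<pi> p ` rule_vars (rl p) \<inter> \<pi> q ` rule_vars (rl q) = {}"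
    using bij_rename_family_apart[OF inf \<open>finite P0\<close> _ \<open>finite U\<close>, of "\<lambda>p. rule_vars (rl p)"]
    by (auto simp: rule_vars_def)
  from match obtain M where M: "\<forall>p\<in>P0. s |_ p = fst (rl p) \<cdot> M p \<and> t |_ p = snd (rl p) \<cdot> M p"
    by metis
  obtain \<theta> where \<theta>: "\<And>p x. p \<in> P0 \<Longrightarrow> x \<in> \<pi> p ` rule_vars (rl p) \<Longrightarrow> \<theta> x = (M p \<circ> inv (\<pi> p)) x"
    and \<theta>_\<mu>: "\<And>x. x \<notin> (\<Union>p\<in>P0. \<pi> p ` rule_vars (rl p)) \<Longrightarrow> \<theta> x = \<mu> x"
    by (rule subst_glue[OF \<pi>(3), of "\<lambda>p. M p \<circ> inv (\<pi> p)" \<mu>]) (rule that)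
  have renamed: "u \<cdot> (Var \<circ> \<pi> p) \<cdot> \<theta> = u \<cdot> M p" if "p \<in> P0" "vars_term u \<subseteq> rule_vars (rl p)" for p u
  proof -
    have "u \<cdot> (Var \<circ> \<pi> p) \<cdot> \<theta> = u \<cdot> (Var \<circ> \<pi> p) \<cdot> (M p \<circ> inv (\<pi> p))"
      using that \<theta> by (intro term_subst_eq) (auto simp: vars_term_subst)
    also have "\<dots> = u \<cdot> M p"
      using \<pi>(1) that(1) by (simp add: subst_rename_comp_inv)
    finally show ?thesis .
  qed
  have "\<forall>z\<in>U. \<theta> z = \<mu> z"
    using \<pi>(2) \<theta>_\<mu> by blast
  moreover have "\<forall>p\<in>P0. fst (rename_rule (\<pi> p) (rl p)) \<cdot> \<theta> = s |_ p \<and>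
      snd (rename_rule (\<pi> p) (rl p)) \<cdot> \<theta> = t |_ p"
    using M renamed by (auto simp: rename_rule_def rule_vars_def)
  ultimately show thesis
    using that \<pi> by (simp add: rule_vars_rename_rule)
qed

lemma par_crit_peak_of_overlap:
  assumes "P0 \<subseteq> fun_poss l" "P0 \<noteq> {}" "pairwise_parallel P0" "\<forall>p\<in>P0. rl p \<in> R \<and> bij (\<pi> p)"
    and "\<forall>p\<in>P0. rule_vars (rename_rule (\<pi> p) (rl p)) \<inter> rule_vars (l, r) = {}"
    and "\<forall>p\<in>P0. \<forall>q\<in>P0. p \<noteq> q \<longrightarrow>
      rule_vars (rename_rule (\<pi> p) (rl p)) \<inter> rule_vars (rename_rule (\<pi> q) (rl q)) = {}"
    and "mgu ((\<lambda>p. (fst (rename_rule (\<pi> p) (rl p)), l |_ p)) ` P0) \<sigma>"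
    and "P0 = {[]} \<longrightarrow> \<not> variant (rl []) (l, r)"
  shows "par_crit_peak R {(l, r)}
    (par_replace (l \<cdot> \<sigma>) P0 (\<lambda>p. snd (rename_rule (\<pi> p) (rl p)) \<cdot> \<sigma>)) P0 (l \<cdot> \<sigma>) (r \<cdot> \<sigma>)"
  unfolding par_crit_peak_def
proof (rule exI[of _ l], rule exI[of _ r], rule exI[of _ "\<lambda>p. rename_rule (\<pi> p) (rl p)"],
    rule exI[of _ \<sigma>], intro conjI)
  show "\<exists>lr\<in>{(l, r)}. variant (l, r) lr"
    using variant_rename_rule[of id "(l, r)"] by (simp add: rename_rule_def comp_def)
  show "\<forall>p\<in>P0. \<exists>lr\<in>R. variant (rename_rule (\<pi> p) (rl p)) lr"
    using assms(4) variant_rename_rule by blast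
  show "P0 = {[]} \<longrightarrow> \<not> variant (rename_rule (\<pi> []) (rl [])) (l, r)"
    using assms(4,8) variant_of_rename_rule by blast
qed (use assms in simp_all)

lemma mgu_within_factor:
  assumes "finite E" "unifier E \<theta>" "eqs_vars E \<inter> X = {}"
  obtains \<sigma> \<delta> where "mgu E \<sigma>" "\<theta> = subst_comp \<sigma> \<delta>" "\<And>x. x \<in> X \<Longrightarrow> \<sigma> x = Var x"
    and "\<And>z. z \<notin> X \<Longrightarrow> vars_term (\<sigma> z) \<inter> X = {}"
proof -
  obtain \<sigma> where \<sigma>: "mgu_within E \<sigma>"
    using mgu_within_exists[OF assms(1,2)] by blast
  then obtain \<delta> where "\<theta> = subst_comp \<sigma> \<delta>"
    using assms(2) by (auto simp: mgu_within_def mgu_def)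
  moreover have "vars_term (\<sigma> z) \<inter> X = {}" if "z \<notin> X" for z
    using \<sigma> assms(3) that by (cases "z \<in> eqs_vars E") (auto simp: mgu_within_def)
  ultimately show thesis
    by (intro that[of \<sigma> \<delta>]) (use \<sigma> assms(3) in \<open>auto simp: mgu_within_def\<close>)
qed

lemma overlap_mgu:
  fixes rl' :: "pos \<Rightarrow> ('f, 'v) rule"
  assumes "finite P0" "P0 \<subseteq> fun_poss l"
    and apart: "\<forall>p\<in>P0. rule_vars (rl' p) \<inter> rule_vars (l, r) = {}"
    and \<theta>_\<mu>: "\<forall>z\<in>rule_vars (l, r). \<theta> z = \<mu> z"
    and match: "\<forall>p\<in>P0. fst (rl' p) \<cdot> \<theta> = l \<cdot> \<mu> |_ p"
  obtains \<sigma> \<delta> where "mgu ((\<lambda>p. (fst (rl' p), l |_ p)) ` P0) \<sigma>" "\<theta> = subst_comp \<sigma> \<delta>"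
    and "\<And>x. x \<in> vars_term l - vars_at l P0 \<Longrightarrow> \<sigma> x = Var x"
    and "\<And>z. z \<notin> vars_term l - vars_at l P0 \<Longrightarrow> vars_term (\<sigma> z) \<inter> (vars_term l - vars_at l P0) = {}"
proof -
  let ?E = "(\<lambda>p. (fst (rl' p), l |_ p)) ` P0"
  have "unifier ?E \<theta>"
    unfolding unifier_def
  proof clarify
    fix p assume p: "p \<in> P0"
    have "l \<cdot> \<theta> = l \<cdot> \<mu>"
      using \<theta>_\<mu> by (auto simp: rule_vars_def intro!: term_subst_eq)
    moreover have "p \<in> poss l"
      using p assms(2) fun_poss_imp_poss by blast
    ultimately have "l |_ p \<cdot> \<theta> = l \<cdot> \<mu> |_ p"
      by (simp flip: subt_at_subst)
    with p match show "fst (rl' p) \<cdot> \<theta> = l |_ p \<cdot> \<theta>"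
      by simp
  qed
  moreover have "eqs_vars ?E \<inter> (vars_term l - vars_at l P0) = {}"
  proof -
    have "vars_term (fst (rl' p)) \<inter> vars_term l = {}" if "p \<in> P0" for p
      using apart that by (auto simp: rule_vars_def)
    moreover have "vars_term (l |_ p) \<subseteq> vars_at l P0" if "p \<in> P0" for p
      using that by (auto simp: vars_at_def)
    ultimately show ?thesis
      unfolding eqs_vars_def by blast
  qed
  ultimately show thesis
    using mgu_within_factor[of ?E \<theta>] \<open>finite P0\<close> that by blast
qed

lemma par_step_linear_instance_beside_overlap:
  assumes ll: "left_linear_term l" and step: "par_step_with R P rl (l \<cdot> \<mu>) t"
    and P0: "P0 = P \<inter> fun_poss l"
  obtains \<rho> where "par_replace (l \<cdot> \<mu>) (P - P0) (\<lambda>p. t |_ p) = l \<cdot> \<rho>"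
    and "\<And>x. x \<in> vars_at l P0 \<Longrightarrow> \<rho> x = \<mu> x"
    and "\<And>x. x \<in> vars_term l \<Longrightarrow> par_rstep R (\<mu> x) (\<rho> x)"
proof -
  have "(P - P0) \<inter> fun_poss l = {}"
    by (auto simp: P0)
  then obtain \<rho> where \<rho>: "par_replace (l \<cdot> \<mu>) (P - P0) (\<lambda>p. t |_ p) = l \<cdot> \<rho>"
    and var_step: "\<And>q x. q \<in> poss l \<Longrightarrow> l |_ q = Var x \<Longrightarrow>
      par_step_with R {p. q @ p \<in> P - P0} (\<lambda>p. rl (q @ p)) (\<mu> x) (\<rho> x)"
    by (rule par_step_with_linear_instance[OF ll par_step_with_restrict[OF step Diff_subset]])
      (rule that)
  have "\<rho> x = \<mu> x" if "x \<in> vars_at l P0" for x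
  proof -
    from that obtain p0 where p0: "p0 \<in> P0" "x \<in> vars_term (l |_ p0)"
      by (auto simp: vars_at_def)
    then obtain q where q: "q \<in> poss (l |_ p0)" "l |_ p0 |_ q = Var x"
      using var_pos_exists[OF p0(2)] by blast
    have "p0 \<in> poss l"
      using p0(1) by (simp add: P0 fun_poss_imp_poss)
    with q have pos: "p0 @ q \<in> poss l" "l |_ (p0 @ q) = Var x"
      by (simp_all add: append_in_poss_iff subt_at_append)
    have none_below: "{p. p0 @ q @ p \<in> P - P0} = {}"
    proof -
      have "parallel_pos p0 (p0 @ q @ p)" if "p0 @ q @ p \<in> P - P0" for p
      proof -
        have "p0 \<in> P" "p0 \<noteq> p0 @ q @ p" "p0 @ q @ p \<in> P"
          using p0(1) that by (auto simp: P0)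
        with step show ?thesis
          by (auto simp: par_step_with_def pairwise_parallel_def)
      qed
      then show ?thesis
        by (auto simp: parallel_pos_def prefix_pos_def)
    qed
    have "par_step_with R {p. p0 @ q @ p \<in> P - P0} (\<lambda>p. rl (p0 @ q @ p)) (\<mu> x) (\<rho> x)"
      using var_step[OF pos] by (simp only: append_assoc)
    then show ?thesis
      unfolding none_below
      by (rule par_step_with_empty)
  qed
  moreover have "par_rstep R (\<mu> x) (\<rho> x)" if x: "x \<in> vars_term l" for x
  proof -
    obtain q where "q \<in> poss l" "l |_ q = Var x"
      using var_pos_exists[OF x] by blast
    then show ?thesis
      unfolding par_rstep_def par_step_def using var_step by blast
  qed
  ultimately show thesis
    by (rule that[OF \<rho>])
qed

lemma par_subst_completing_overlap:
  assumes ll: "left_linear_term l" and step: "par_step_with R P rl (l \<cdot> \<mu>) t"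
    and P0: "P0 = P \<inter> fun_poss l" and X: "X = vars_term l - vars_at l P0"
    and \<sigma>_X: "\<And>x. x \<in> X \<Longrightarrow> \<sigma> x = Var x" "\<And>z. z \<notin> X \<Longrightarrow> vars_term (\<sigma> z) \<inter> X = {}"
    and \<sigma>\<delta>: "\<And>x. x \<in> vars_term l \<Longrightarrow> \<sigma> x \<cdot> \<delta> = \<mu> x"
    and g: "\<And>p. p \<in> P0 \<Longrightarrow> vars_term (g p) \<inter> X = {}" "\<And>p. p \<in> P0 \<Longrightarrow> g p \<cdot> \<delta> = t |_ p"
  shows "\<exists>\<tau>. par_subst R \<delta> \<tau> \<and> par_replace (l \<cdot> \<sigma>) P0 g \<cdot> \<tau> = t \<and>
    par_step R (P - P0) (par_replace (l \<cdot> \<sigma>) P0 g \<cdot> \<delta>) (par_replace (l \<cdot> \<sigma>) P0 g \<cdot> \<tau>)"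
proof -
  obtain \<rho> where \<rho>: "par_replace (l \<cdot> \<mu>) (P - P0) (\<lambda>p. t |_ p) = l \<cdot> \<rho>"
    and \<rho>_\<mu>: "\<And>x. x \<in> vars_at l P0 \<Longrightarrow> \<rho> x = \<mu> x"
    and \<mu>_\<rho>: "\<And>x. x \<in> vars_term l \<Longrightarrow> par_rstep R (\<mu> x) (\<rho> x)"
    by (rule par_step_linear_instance_beside_overlap[OF ll step P0]) (rule that)
  define \<tau> where "\<tau> z = (if z \<in> X then \<rho> z else \<delta> z)" for z
  have outside_X: "u \<cdot> \<tau> = u \<cdot> \<delta>" if "vars_term u \<inter> X = {}" for u
    using that by (auto simp: \<tau>_def intro!: term_subst_eq)
  have "l \<cdot> \<sigma> \<cdot> \<tau> = l \<cdot> \<rho>"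
    unfolding subst_subst_comp
  proof (rule term_subst_eq)
    fix x assume x: "x \<in> vars_term l"
    show "subst_comp \<sigma> \<tau> x = \<rho> x"
    proof (cases "x \<in> X")
      case True
      then show ?thesis by (simp add: subst_comp_def \<sigma>_X(1) \<tau>_def)
    next
      case False
      then have "\<sigma> x \<cdot> \<tau> = \<mu> x"
        using outside_X[OF \<sigma>_X(2)] \<sigma>\<delta>[OF x] by simp
      with False x show ?thesis
        by (simp add: subst_comp_def X \<rho>_\<mu>)
    qed
  qed
  note l\<sigma>\<tau> = this
  have P0_poss: "P0 \<subseteq> poss (l \<cdot> \<sigma>)"
    by (auto simp: P0 intro: poss_imp_subst_poss fun_poss_imp_poss)
  have g_\<tau>: "g p \<cdot> \<tau> = t |_ p" if "p \<in> P0" for p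
    using outside_X[OF g(1)[OF that]] g(2)[OF that] by simp
  from step have P: "P \<subseteq> poss (l \<cdot> \<mu>)" "pairwise_parallel P" "t = par_replace (l \<cdot> \<mu>) P (\<lambda>p. t |_ p)"
    by (auto simp: par_step_with_def)
  have "P - (P - P0) = P0"
    by (auto simp: P0)
  have "par_replace (l \<cdot> \<sigma>) P0 g \<cdot> \<tau> = par_replace (l \<cdot> \<sigma> \<cdot> \<tau>) P0 (\<lambda>p. g p \<cdot> \<tau>)"
    by (rule par_replace_subst[OF P0_poss])
  also have "\<dots> = par_replace (par_replace (l \<cdot> \<mu>) (P - P0) (\<lambda>p. t |_ p)) (P - (P - P0)) (\<lambda>p. t |_ p)"
    unfolding l\<sigma>\<tau> \<rho> \<open>P - (P - P0) = P0\<close> by (rule par_replace_cong) (simp add: g_\<tau>)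
  also have "\<dots> = t"
    using par_replace_split[OF P(1,2) Diff_subset] P(3) by simp
  finally have t0_\<tau>: "par_replace (l \<cdot> \<sigma>) P0 g \<cdot> \<tau> = t" .
  have "l \<cdot> \<sigma> \<cdot> \<delta> = l \<cdot> \<mu>"
    unfolding subst_subst_comp by (rule term_subst_eq) (simp add: subst_comp_def \<sigma>\<delta>)
  then have "par_replace (l \<cdot> \<sigma>) P0 g \<cdot> \<delta> = par_replace (l \<cdot> \<mu>) P0 (\<lambda>p. t |_ p)"
    unfolding par_replace_subst[OF P0_poss] by (auto intro: par_replace_cong simp: g(2))
  then have "par_step R (P - P0) (par_replace (l \<cdot> \<sigma>) P0 g \<cdot> \<delta>) (par_replace (l \<cdot> \<sigma>) P0 g \<cdot> \<tau>)"
    using par_step_with_remainder[OF step, of P0] P0 t0_\<tau> by (auto simp: par_step_def)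
  moreover have "par_subst R \<delta> \<tau>"
    unfolding par_subst_def
  proof
    fix z
    show "par_rstep R (\<delta> z) (\<tau> z)"
    proof (cases "z \<in> X")
      case True
      then have "\<delta> z = \<mu> z"
        using \<sigma>\<delta>[of z] \<sigma>_X(1)[of z] by (simp add: X)
      with True show ?thesis
        using \<mu>_\<rho>[of z] by (simp add: \<tau>_def X)
    next
      case False
      then show ?thesis
        using par_step_refl by (auto simp: \<tau>_def par_rstep_def)
    qed
  qed
  ultimately show ?thesis
    using t0_\<tau> by blast
qed

lemma non_orthogonal_peak_critical:
  fixes R :: "('f, 'v) rule set"
  assumes inf: "infinite (UNIV :: 'v set)" and ll: "left_linear_term l"
    and step: "par_step_with R P rl (l \<cdot> \<mu>) t"
    and orth: "\<not> orthogonal_peak (l, r) P rl"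
  shows "\<exists>t0 P0 s0 u0 \<sigma> \<tau>. par_crit_peak R {(l, r)} t0 P0 s0 u0 \<and>
    l \<cdot> \<mu> = s0 \<cdot> \<sigma> \<and> t = t0 \<cdot> \<tau> \<and> r \<cdot> \<mu> = u0 \<cdot> \<sigma> \<and>
    par_subst R \<sigma> \<tau> \<and> par_step R (P - P0) (t0 \<cdot> \<sigma>) (t0 \<cdot> \<tau>) \<and> P0 \<subseteq> P"
proof -
  define P0 where "P0 = P \<inter> fun_poss l"
  define X where "X = vars_term l - vars_at l P0"
  have P0: "P0 \<subseteq> P" "P0 \<subseteq> fun_poss l" "finite P0" "P0 \<noteq> {}"
    using orth finite_fun_poss[of l] by (auto simp: P0_def orthogonal_peak_def)
  from step have P: "pairwise_parallel P" "\<forall>p\<in>P. rl p \<in> R"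
    and match: "\<forall>p\<in>P0. \<exists>\<mu>'. l \<cdot> \<mu> |_ p = fst (rl p) \<cdot> \<mu>' \<and> t |_ p = snd (rl p) \<cdot> \<mu>'"
    using P0(1) by (auto simp: par_step_with_def)
  have "finite (rule_vars (l, r))"
    by (simp add: rule_vars_def)
  then obtain \<pi> \<theta> where \<pi>: "\<forall>p\<in>P0. bij (\<pi> p)"
    "\<forall>p\<in>P0. rule_vars (rename_rule (\<pi> p) (rl p)) \<inter> rule_vars (l, r) = {}"
    "\<forall>p\<in>P0. \<forall>q\<in>P0. p \<noteq> q \<longrightarrow>
      rule_vars (rename_rule (\<pi> p) (rl p)) \<inter> rule_vars (rename_rule (\<pi> q) (rl q)) = {}"
    and \<theta>_\<mu>: "\<forall>z\<in>rule_vars (l, r). \<theta> z = \<mu> z"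
    and \<theta>_match: "\<forall>p\<in>P0. fst (rename_rule (\<pi> p) (rl p)) \<cdot> \<theta> = l \<cdot> \<mu> |_ p \<and>
      snd (rename_rule (\<pi> p) (rl p)) \<cdot> \<theta> = t |_ p"
    by (rule renamed_rules_common_matcher[OF inf P0(3) _ match]) (rule that)
  have "\<forall>p\<in>P0. fst (rename_rule (\<pi> p) (rl p)) \<cdot> \<theta> = l \<cdot> \<mu> |_ p"
    using \<theta>_match by blast
  then obtain \<sigma> \<delta> where \<sigma>: "mgu ((\<lambda>p. (fst (rename_rule (\<pi> p) (rl p)), l |_ p)) ` P0) \<sigma>"
    "\<theta> = subst_comp \<sigma> \<delta>"
    and \<sigma>_X: "\<And>x. x \<in> vars_term l - vars_at l P0 \<Longrightarrow> \<sigma> x = Var x"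
      "\<And>z. z \<notin> vars_term l - vars_at l P0 \<Longrightarrow> vars_term (\<sigma> z) \<inter> (vars_term l - vars_at l P0) = {}"
    by (rule overlap_mgu[where rl' = "\<lambda>p. rename_rule (\<pi> p) (rl p)", OF P0(3,2) \<pi>(2) \<theta>_\<mu>])
      (rule that)
  note \<sigma>_X = \<sigma>_X[folded X_def]
  have l_\<theta>: "l \<cdot> \<theta> = l \<cdot> \<mu>" "r \<cdot> \<theta> = r \<cdot> \<mu>"
    using \<theta>_\<mu> by (auto simp: rule_vars_def intro!: term_subst_eq)
  have "par_crit_peak R {(l, r)}
      (par_replace (l \<cdot> \<sigma>) P0 (\<lambda>p. snd (rename_rule (\<pi> p) (rl p)) \<cdot> \<sigma>)) P0 (l \<cdot> \<sigma>) (r \<cdot> \<sigma>)"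
  proof (rule par_crit_peak_of_overlap[OF P0(2,4) pairwise_parallel_subset[OF P(1) P0(1)] _ \<pi>(2,3)])
    show "\<forall>p\<in>P0. rl p \<in> R \<and> bij (\<pi> p)"
      using P(2) P0(1) \<pi>(1) by blast
    show "mgu ((\<lambda>p. (fst (rename_rule (\<pi> p) (rl p)), l |_ p)) ` P0) \<sigma>"
      by (fact \<sigma>(1))
    show "P0 = {[]} \<longrightarrow> \<not> variant (rl []) (l, r)"
      using orth pairwise_parallel_Nil[OF P(1)] P0(1) by (auto simp: orthogonal_peak_def)
  qed
  moreover obtain \<tau> where "par_subst R \<delta> \<tau>"
    "par_replace (l \<cdot> \<sigma>) P0 (\<lambda>p. snd (rename_rule (\<pi> p) (rl p)) \<cdot> \<sigma>) \<cdot> \<tau> = t"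
    "par_step R (P - P0) (par_replace (l \<cdot> \<sigma>) P0 (\<lambda>p. snd (rename_rule (\<pi> p) (rl p)) \<cdot> \<sigma>) \<cdot> \<delta>)
      (par_replace (l \<cdot> \<sigma>) P0 (\<lambda>p. snd (rename_rule (\<pi> p) (rl p)) \<cdot> \<sigma>) \<cdot> \<tau>)"
  proof -
    have \<sigma>\<delta>: "\<sigma> x \<cdot> \<delta> = \<mu> x" if "x \<in> vars_term l" for x
      using \<theta>_\<mu> that by (simp add: \<sigma>(2) subst_comp_def rule_vars_def)
    have g_vars: "vars_term (snd (rename_rule (\<pi> p) (rl p)) \<cdot> \<sigma>) \<inter> X = {}" if "p \<in> P0" for p
    proof -
      have "vars_term (snd (rename_rule (\<pi> p) (rl p))) \<inter> X = {}"
        using \<pi>(2) that by (auto simp: rule_vars_def X_def)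
      then show ?thesis
        using \<sigma>_X(2) by (auto simp: vars_term_subst)
    qed
    have g_match: "snd (rename_rule (\<pi> p) (rl p)) \<cdot> \<sigma> \<cdot> \<delta> = t |_ p" if "p \<in> P0" for p
      using \<theta>_match that by (simp add: \<sigma>(2) subst_subst_comp)
    show thesis
      using par_subst_completing_overlap[where g = "\<lambda>p. snd (rename_rule (\<pi> p) (rl p)) \<cdot> \<sigma>",
          OF ll step P0_def X_def \<sigma>_X \<sigma>\<delta> g_vars g_match] that
      by blast
  qed
  moreover have "l \<cdot> \<mu> = l \<cdot> \<sigma> \<cdot> \<delta>" "r \<cdot> \<mu> = r \<cdot> \<sigma> \<cdot> \<delta>"
    using l_\<theta> by (simp_all add: \<sigma>(2) subst_subst_comp)
  ultimately show ?thesis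
    using P0(1) by blast
qed

theorem lemma3:
  fixes R :: "('f, 'v) rule set" and l r :: "('f, 'v) term"
    and P :: "pos set" and rl :: "pos \<Rightarrow> ('f, 'v) rule"
    and s t u :: "('f, 'v) term"
  assumes inf_vars: "infinite (UNIV :: 'v set)"
    and trs: "wf_trs R"
    and rule: "wf_rule (l, r)"
    and ll: "left_linear_rule (l, r)"
    and par: "par_step_with R P rl s t"
    and root: "root_step {(l, r)} s u"
  shows "(orthogonal_peak (l, r) P rl \<longrightarrow>
            (\<exists>v P'. (t = v \<or> root_step {(l, r)} t v) \<and> par_step R P' u v \<and>
                    vars_at v P' \<subseteq> vars_at s P))
       \<and> (\<not> orthogonal_peak (l, r) P rl \<longrightarrow>
            (\<exists>t0 P0 s0 u0 \<sigma> \<tau>. par_crit_peak R {(l, r)} t0 P0 s0 u0 \<and>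
                s = s0 \<cdot> \<sigma> \<and> t = t0 \<cdot> \<tau> \<and> u = u0 \<cdot> \<sigma> \<and>
                par_subst R \<sigma> \<tau> \<and>
                par_step R (P - P0) (t0 \<cdot> \<sigma>) (t0 \<cdot> \<tau>) \<and> P0 \<subseteq> P))"
proof -
  from root obtain \<mu> where s: "s = l \<cdot> \<mu>" and u: "u = r \<cdot> \<mu>"
    by (auto simp: root_step_def)
  have vars: "vars_term r \<subseteq> vars_term l"
    using rule by (simp add: wf_rule_def)
  have lin: "left_linear_term l"
    using ll by (simp add: left_linear_rule_def)
  have step: "par_step_with R P rl (l \<cdot> \<mu>) t"
    using par s by simp
  have wf: "\<forall>p\<in>P. vars_term (snd (rl p)) \<subseteq> vars_term (fst (rl p))"
    using par trs by (auto simp: par_step_with_def wf_trs_def wf_rule_def)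
  show ?thesis
    using orthogonal_peak_joinable[OF vars lin step wf]
      non_orthogonal_peak_critical[OF inf_vars lin step]
    unfolding s u by blast
qed

end
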